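(* Let $A\in\mathscr{D}\mathrm{iag}$ with $L(A)>0$. There exist a neighborhood $\mathscr{N}_A$ of $A$ in $\mathrm{SL}_2(\mathbb{R})^k$, such that $B_i$ is hyperbolic for all $B\in\mathscr{N}_A$ and $i\in\Sigma_H(A)$, and a constant $C=C(A)<\infty$ such that for all $B\in\mathscr{N}_A$, $$d(B,\mathscr{D}\mathrm{iag})\le C\rho(B)\quad\text{and}\quad \rho(B)\le C\,d(B,A).$$ In particular, for every $B\in\mathscr{N}_A$, either $d(B,\mathscr{D}\mathrm{iag})\le C\rho_-(B)$ or $d(B,\mathscr{D}\mathrm{iag})\le C\rho_-(B^{-1})$.
   Context: $\mathrm{SL}_2(\mathbb{R})$ denotes real $2\times2$ matrices with determinant $\pm1$. $\Sigma=\{1,\dots,k\}$, $p=(p_1,\dots,p_k)$ a probability vector with positive entries, and for cocycles $B=(B_1,\dots,B_k)$, $d(A,B)=\max_j\|A_j-B_j\|$; $L(B)$ is the Lyapunov exponent of the i.i.d. product $B_{x_{n-1}}\cdots B_{x_0}$ with $x_j$ distributed by $p$. $\mathscr{D}\mathrm{iag}$ is the set of cocycles with two transversal lines invariant under all matrices; $d(B,\mathscr{D}\mathrm{iag})=\inf_{D\in\mathscr{D}\mathrm{iag}}d(B,D)$. $B^{-1}=(B_1^{-1},\dots,B_k^{-1})$. Projective space $\mathbb{P}=\mathbb{P}(\mathbb{R}^2)$ with metric $d(\hat p,\hat q)=|\sin\angle(p,q)|$; $\hat g$ denotes the projective action of $g$. For $A\in\mathscr{D}\mathrm{iag}$ with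 $L(A)>0$, let $e_+(A),e_-(A)$ be unit vectors spanning the two invariant lines, on which the restricted exponents are $L(A)$ and $-L(A)$ respectively, and let $a_j$ be defined by $A_je_+(A)=a_je_+(A)$; set $\Sigma_H(A)=\{i:|a_i|\ge e^{L(A)}\}$. A matrix $g$ is hyperbolic if it has real eigenvalues of modulus $>1$ and $<1$; $\hat e_+(g),\hat e_-(g)$ denote the corresponding eigendirections. For $B$ with $B_i$ hyperbolic for all $i\in\Sigma_H(A)$: $\rho_\pm(B)=\max_{i\in\Sigma_H(A)}\max_{1\le j\le k}d(\hat B_j\hat e_\pm(B_i),\hat e_\pm(B_i))$ and $\rho(B)=\max\{\rho_-(B),\rho_+(B)\}$; $\rho_-(B^{-1})$ is defined in the same way with $B_j^{-1}$ in place of $B_j$ (same index set $\Sigma_H(A)$). *)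

theory Defs
  imports "HOL-Analysis.Analysis"
begin

type_synonym mat2 = "real^2^2"

definition mnorm :: "mat2 \<Rightarrow> real" where
  "mnorm M = onorm (\<lambda>x. M *v x)"

text \<open>SL_2(R) in the paper's convention: determinant +1 or -1; cocycles indexed by a finite type.\<close>
definition SL2k :: "('k::finite \<Rightarrow> mat2) set" where
  "SL2k = {B. \<forall>j. \<bar>det (B j)\<bar> = 1}"

definition dcoc :: "('k::finite \<Rightarrow> mat2) \<Rightarrow> ('k \<Rightarrow> mat2) \<Rightarrow> real" where
  "dcoc A B = Max (range (\<lambda>j. mnorm (A j - B j)))"

text \<open>Product B_{x_{n-1}} ... B_{x_0} for the word w = [x_0, ..., x_{n-1}].\<close>
definition word_prod :: "('k \<Rightarrow> mat2) \<Rightarrow> 'k list \<Rightarrow> mat2" where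
  "word_prod B w = foldl (\<lambda>M x. B x ** M) (mat 1) w"

text \<open>Lyapunov exponent of the i.i.d. product with law p:
  L(B) = lim (1/n) E log ||B_{x_{n-1}} ... B_{x_0}||.\<close>
definition lyap :: "('k::finite \<Rightarrow> real) \<Rightarrow> ('k \<Rightarrow> mat2) \<Rightarrow> real" where
  "lyap p B = lim (\<lambda>n. (\<Sum>w\<in>{w::'k list. length w = n}.
        prod_list (map p w) * ln (mnorm (word_prod B w))) / real n)"

definition inv_line :: "('k \<Rightarrow> mat2) \<Rightarrow> real^2 \<Rightarrow> bool" where
  "inv_line A e \<longleftrightarrow> e \<noteq> 0 \<and> (\<forall>j. \<exists>a. A j *v e = a *\<^sub>R e)"

definition line_eig :: "('k \<Rightarrow> mat2) \<Rightarrow> real^2 \<Rightarrow> 'k \<Rightarrow> real" where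
  "line_eig A e j = ((A j *v e) \<bullet> e) / (e \<bullet> e)"

text \<open>Lyapunov exponent of the cocycle restricted to an invariant line
  (for the i.i.d. product this is sum_j p_j log|a_j|).\<close>
definition line_exp :: "('k::finite \<Rightarrow> real) \<Rightarrow> ('k \<Rightarrow> mat2) \<Rightarrow> real^2 \<Rightarrow> real" where
  "line_exp p A e = (\<Sum>j\<in>UNIV. p j * ln \<bar>line_eig A e j\<bar>)"

definition Diag :: "('k::finite \<Rightarrow> mat2) set" where
  "Diag = {A. A \<in> SL2k \<and> (\<exists>u v. inv_line A u \<and> inv_line A v \<and> \<not> (\<exists>c. v = c *\<^sub>R u))}"

definition dDiag :: "('k::finite \<Rightarrow> mat2) \<Rightarrow> real" where
  "dDiag B = Inf {dcoc B D | D. D \<in> Diag}"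

definition e_plus :: "('k::finite \<Rightarrow> real) \<Rightarrow> ('k \<Rightarrow> mat2) \<Rightarrow> real^2" where
  "e_plus p A = (SOME e. norm e = 1 \<and> inv_line A e \<and> line_exp p A e = lyap p A \<and>
      (\<exists>f. norm f = 1 \<and> inv_line A f \<and> \<not> (\<exists>c. f = c *\<^sub>R e) \<and> line_exp p A f = - lyap p A))"

definition Sigma_H :: "('k::finite \<Rightarrow> real) \<Rightarrow> ('k \<Rightarrow> mat2) \<Rightarrow> 'k set" where
  "Sigma_H p A = {i. \<bar>line_eig A (e_plus p A) i\<bar> \<ge> exp (lyap p A)}"

definition hyperbolic :: "mat2 \<Rightarrow> bool" where
  "hyperbolic g \<longleftrightarrow> (\<exists>u v (l::real) (m::real). u \<noteq> 0 \<and> v \<noteq> 0 \<and>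
      g *v u = l *\<^sub>R u \<and> g *v v = m *\<^sub>R v \<and> \<bar>l\<bar> > 1 \<and> \<bar>m\<bar> < 1)"

definition edir_plus :: "mat2 \<Rightarrow> real^2" where
  "edir_plus g = (SOME v. v \<noteq> 0 \<and> (\<exists>l. \<bar>l\<bar> > 1 \<and> g *v v = l *\<^sub>R v))"

definition edir_minus :: "mat2 \<Rightarrow> real^2" where
  "edir_minus g = (SOME v. v \<noteq> 0 \<and> (\<exists>l. \<bar>l\<bar> < 1 \<and> g *v v = l *\<^sub>R v))"

definition pdist :: "real^2 \<Rightarrow> real^2 \<Rightarrow> real" where
  "pdist u v = \<bar>sin (arccos ((u \<bullet> v) / (norm u * norm v)))\<bar>"

definition rho_plus :: "('k::finite \<Rightarrow> real) \<Rightarrow> ('k \<Rightarrow> mat2) \<Rightarrow> ('k \<Rightarrow> mat2) \<Rightarrow> real" where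
  "rho_plus p A B = Max {pdist (B j *v edir_plus (B i)) (edir_plus (B i)) | i j. i \<in> Sigma_H p A}"

definition rho_minus :: "('k::finite \<Rightarrow> real) \<Rightarrow> ('k \<Rightarrow> mat2) \<Rightarrow> ('k \<Rightarrow> mat2) \<Rightarrow> real" where
  "rho_minus p A B = Max {pdist (B j *v edir_minus (B i)) (edir_minus (B i)) | i j. i \<in> Sigma_H p A}"

definition rho :: "('k::finite \<Rightarrow> real) \<Rightarrow> ('k \<Rightarrow> mat2) \<Rightarrow> ('k \<Rightarrow> mat2) \<Rightarrow> real" where
  "rho p A B = max (rho_minus p A B) (rho_plus p A B)"

definition coc_inv :: "('k \<Rightarrow> mat2) \<Rightarrow> ('k \<Rightarrow> mat2)" where
  "coc_inv B = (\<lambda>j. matrix_inv (B j))"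

end

theory Submission
  imports Defs
begin

text \<open>
  Let \<open>A\<^sub>j e = a\<^sub>j e\<close> and \<open>A\<^sub>j f = c\<^sub>j f\<close> for unit vectors \<open>e\<close>, \<open>f\<close> spanning the invariant lines
  of \<open>A\<close>, so that \<open>|a\<^sub>j c\<^sub>j| = 1\<close>. The norm of a product of \<open>n\<close> matrices \<open>A\<^sub>j\<close> is comparable to
  \<open>exp |\<Sum>\<^sub>k ln |a\<^sub>x\<^sub>k||\<close>, and a law of large numbers gives \<open>L(A) = |\<Sum>\<^sub>j p\<^sub>j ln |a\<^sub>j||\<close>. Hence some
  \<open>|a\<^sub>i| \<ge> e\<^bsup>L(A)\<^esup> > 1 > |c\<^sub>i|\<close>, and for \<open>i \<in> \<Sigma>\<^sub>H(A)\<close> the matrix \<open>A\<^sub>i\<close> is hyperbolic, which persists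
  under perturbation since it is expressed by trace and determinant.

  If \<open>B\<^sub>i v = \<lambda> v\<close>, then \<open>|\<lambda> - c\<^sub>i| |det(e, v)| \<le> \<parallel>B\<^sub>i - A\<^sub>i\<parallel> |v|\<close>, so the expanding (contracting)
  eigendirection of \<open>B\<^sub>i\<close> lies within \<open>O(d(B, A))\<close> of \<open>e\<close> (of \<open>f\<close>); as every \<open>A\<^sub>j\<close> fixes the lines
  of \<open>e\<close> and \<open>f\<close>, every \<open>B\<^sub>j\<close> moves these eigendirections by \<open>O(d(B, A))\<close>, which bounds \<open>\<rho>(B)\<close>.
  Conversely, the two eigendirections \<open>x\<close>, \<open>y\<close> of some \<open>B\<^sub>i\<close> are transversal and every \<open>B\<^sub>j\<close> moves
  them by at most \<open>\<rho>(B)\<close>: removing the off-diagonal part of each \<open>B\<^sub>j\<close> in the basis \<open>x\<close>, \<open>y\<close> (and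
  fixing the determinant) gives a cocycle in \<open>Diag\<close> at distance \<open>O(\<rho>(B))\<close>. Finally the contracting
  direction of \<open>B\<^sub>i\<^sup>-\<^sup>1\<close> is the expanding direction of \<open>B\<^sub>i\<close>, so \<open>\<rho>\<^sub>+(B) = O(\<rho>\<^sub>-(B\<^sup>-\<^sup>1))\<close>, which
  yields the dichotomy.
\<close>

section \<open>Plane geometry\<close>

definition det2 :: "real^2 \<Rightarrow> real^2 \<Rightarrow> real" where
  "det2 u v = u$1 * v$2 - u$2 * v$1"

lemma vec2_eq_iff: "(u::real^2) = v \<longleftrightarrow> u$1 = v$1 \<and> u$2 = v$2"
  by (auto simp: vec_eq_iff forall_2)

lemma mat2_mult_vec_nth:
  fixes M :: mat2
  shows "(M *v x)$1 = M$1$1 * x$1 + M$1$2 * x$2" and "(M *v x)$2 = M$2$1 * x$1 + M$2$2 * x$2"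
  by (simp_all add: matrix_vector_mult_def sum_2)

lemma trace_mat2: "trace (M::mat2) = M$1$1 + M$2$2"
  by (simp add: trace_def sum_2)

lemma det2_Lagrange: "(u \<bullet> v)\<^sup>2 + (det2 u v)\<^sup>2 = (norm u)\<^sup>2 * (norm v)\<^sup>2"
  unfolding power2_norm_eq_inner by (simp add: inner_vec_def sum_2 det2_def power2_eq_square algebra_simps)

lemma abs_det2_le: "\<bar>det2 u v\<bar> \<le> norm u * norm v"
proof -
  have "(det2 u v)\<^sup>2 \<le> (norm u * norm v)\<^sup>2"
    using det2_Lagrange[of u v] zero_le_power2[of "u \<bullet> v"] unfolding power_mult_distrib by linarith
  then have "\<bar>det2 u v\<bar> \<le> \<bar>norm u * norm v\<bar>"
    by (simp only: abs_le_square_iff)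
  then show ?thesis by simp
qed

lemma det2_swap: "det2 v u = - det2 u v"
  and det2_self [simp]: "det2 u u = 0"
  and det2_zero_left [simp]: "det2 0 v = 0"
  and det2_zero_right [simp]: "det2 u 0 = 0"
  and det2_scaleR_left [simp]: "det2 (c *\<^sub>R u) v = c * det2 u v"
  and det2_scaleR_right [simp]: "det2 u (c *\<^sub>R v) = c * det2 u v"
  and det2_add_left: "det2 (u + w) v = det2 u v + det2 w v"
  and det2_add_right: "det2 u (v + w) = det2 u v + det2 u w"
  and det2_diff_right: "det2 u (v - w) = det2 u v - det2 u w"
  by (simp_all add: det2_def algebra_simps)

lemma det2_mult_vec: "det2 (M *v u) (M *v v) = det M * det2 u v"
  by (simp add: det2_def mat2_mult_vec_nth det_2 algebra_simps)

lemma det2_mult_vec_trace: "det2 (M *v x) y + det2 x (M *v y) = trace M * det2 x y"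
  by (simp add: det2_def mat2_mult_vec_nth trace_mat2 algebra_simps)

lemma det2_Pluecker: "det2 e x * det2 f y - det2 e y * det2 f x = det2 e f * det2 x y"
  by (simp add: det2_def algebra_simps)

lemma vec2_decompose:
  assumes "det2 e f \<noteq> 0"
  shows "x = (det2 x f / det2 e f) *\<^sub>R e + (det2 e x / det2 e f) *\<^sub>R f"
proof -
  have D: "e$1 * f$2 - e$2 * f$1 \<noteq> 0" using assms by (simp add: det2_def)
  have "x$1 = ((x$1 * f$2 - x$2 * f$1) * e$1 + (e$1 * x$2 - e$2 * x$1) * f$1) / (e$1 * f$2 - e$2 * f$1)"
    and "x$2 = ((x$1 * f$2 - x$2 * f$1) * e$2 + (e$1 * x$2 - e$2 * x$1) * f$2) / (e$1 * f$2 - e$2 * f$1)"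
    using D by (simp_all add: field_simps)
  then show ?thesis unfolding vec2_eq_iff det2_def by (simp add: add_divide_distrib)
qed

lemma parallel_iff_det2_eq_0:
  assumes "u \<noteq> 0"
  shows "(\<exists>c. v = c *\<^sub>R u) \<longleftrightarrow> det2 u v = 0"
proof
  assume "det2 u v = 0"
  show "\<exists>c. v = c *\<^sub>R u"
  proof (cases "u$1 = 0")
    case True
    then have "u$2 \<noteq> 0" using assms by (simp add: vec2_eq_iff)
    then show ?thesis using True \<open>det2 u v = 0\<close> unfolding det2_def
      by (intro exI[of _ "v$2 / u$2"]) (simp add: vec2_eq_iff field_simps)
  next
    case False
    then show ?thesis using \<open>det2 u v = 0\<close> unfolding det2_def
      by (intro exI[of _ "v$1 / u$1"]) (simp add: vec2_eq_iff field_simps)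
  qed
qed auto

lemma pdist_eq_det2:
  assumes "u \<noteq> 0" "v \<noteq> 0"
  shows "pdist u v = \<bar>det2 u v\<bar> / (norm u * norm v)"
proof -
  define n where "n = norm u * norm v"
  have n: "n > 0" using assms unfolding n_def by simp
  define c where "c = (u \<bullet> v) / n"
  have "\<bar>c\<bar> \<le> 1"
    using Cauchy_Schwarz_ineq2[of u v] n unfolding c_def n_def by (simp add: abs_divide)
  then have "sin (arccos c) = sqrt (1 - c\<^sup>2)"
    by (simp add: sin_arccos abs_le_iff)
  also have "1 - c\<^sup>2 = (det2 u v / n)\<^sup>2"
  proof -
    have "(u \<bullet> v)\<^sup>2 + (det2 u v)\<^sup>2 = n\<^sup>2"
      using det2_Lagrange[of u v] unfolding n_def by (simp add: power_mult_distrib)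
    then show ?thesis
      using n unfolding c_def by (simp add: power_divide field_simps)
  qed
  finally show ?thesis
    using n unfolding pdist_def c_def n_def by simp
qed

lemma pdist_nonneg: "0 \<le> pdist u v"
  by (simp add: pdist_def)

lemma pdist_zero_left: "pdist 0 v = 1"
  by (simp add: pdist_def)

lemma pdist_commute: "pdist u v = pdist v u"
  by (simp add: pdist_def inner_commute mult.commute)

lemma pdist_scaleR:
  assumes "c \<noteq> 0" "d \<noteq> 0"
  shows "pdist (c *\<^sub>R u) (d *\<^sub>R v) = pdist u v"
proof (cases "u = 0 \<or> v = 0")
  case True
  then show ?thesis
    using assms pdist_zero_left pdist_commute by (metis scaleR_eq_0_iff)
next
  case False
  then show ?thesis
    using assms by (simp add: pdist_eq_det2 abs_mult field_simps)
qed

section \<open>Matrix norms\<close>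

definition entry_sum :: "mat2 \<Rightarrow> real" where
  "entry_sum M = \<bar>M$1$1\<bar> + \<bar>M$1$2\<bar> + \<bar>M$2$1\<bar> + \<bar>M$2$2\<bar>"

lemma mnorm_nonneg: "0 \<le> mnorm M"
  unfolding mnorm_def by (rule onorm_pos_le) simp

lemma norm_mult_vec_le_mnorm: "norm (M *v x) \<le> mnorm M * norm x"
  unfolding mnorm_def by (rule onorm) simp

lemma abs_entry_le_mnorm: "\<bar>M$k$l\<bar> \<le> mnorm M"
  unfolding mnorm_def by (simp add: matrix_component_le_onorm)

lemma abs_eigenvalue_le_mnorm:
  assumes "M *v u = c *\<^sub>R u" "u \<noteq> 0"
  shows "\<bar>c\<bar> \<le> mnorm M"
  using norm_mult_vec_le_mnorm[of M u] assms by simp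

lemma mnorm_le_basis:
  assumes "det2 u v \<noteq> 0"
  shows "mnorm M \<le> (norm (M *v u) * norm v + norm u * norm (M *v v)) / \<bar>det2 u v\<bar>"
  unfolding mnorm_def
proof (rule onorm_le)
  fix z
  let ?D = "\<bar>det2 u v\<bar>"
  define s t where "s = det2 z v / det2 u v" and "t = det2 u z / det2 u v"
  have z: "z = s *\<^sub>R u + t *\<^sub>R v"
    unfolding s_def t_def by (rule vec2_decompose[OF assms])
  have "norm (M *v z) \<le> \<bar>s\<bar> * norm (M *v u) + \<bar>t\<bar> * norm (M *v v)"
    using norm_triangle_ineq[of "s *\<^sub>R (M *v u)" "t *\<^sub>R (M *v v)"]
    by (subst z) (simp add: matrix_vector_right_distrib matrix_vector_mult_scaleR)
  also have "\<dots> \<le> (norm z * norm v / ?D) * norm (M *v u) + (norm u * norm z / ?D) * norm (M *v v)"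
    using abs_det2_le[of z v] abs_det2_le[of u z] assms unfolding s_def t_def abs_divide
    by (intro add_mono mult_right_mono divide_right_mono) auto
  also have "\<dots> = (norm (M *v u) * norm v + norm u * norm (M *v v)) / ?D * norm z"
    by (simp add: add_divide_distrib algebra_simps)
  finally show "norm (M *v z) \<le> (norm (M *v u) * norm v + norm u * norm (M *v v)) / ?D * norm z" .
qed

lemma entry_sum_nonneg: "0 \<le> entry_sum M"
  by (simp add: entry_sum_def)

lemma norm_vec2_le_abs_sum: "norm (x::real^2) \<le> \<bar>x$1\<bar> + \<bar>x$2\<bar>"
  using norm_le_l1_cart[of x] by (simp add: sum_2)

lemma norm_mult_vec_le_entry_sum: "norm (M *v x) \<le> entry_sum M * norm x"
proof -
  have c: "\<bar>x$1\<bar> \<le> norm x" "\<bar>x$2\<bar> \<le> norm x" by (rule component_le_norm_cart)+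
  have "norm (M *v x) \<le> \<bar>(M *v x)$1\<bar> + \<bar>(M *v x)$2\<bar>"
    by (rule norm_vec2_le_abs_sum)
  also have "\<dots> \<le> (\<bar>M$1$1\<bar> * \<bar>x$1\<bar> + \<bar>M$1$2\<bar> * \<bar>x$2\<bar>) + (\<bar>M$2$1\<bar> * \<bar>x$1\<bar> + \<bar>M$2$2\<bar> * \<bar>x$2\<bar>)"
    unfolding mat2_mult_vec_nth by (intro add_mono) (simp_all add: abs_mult[symmetric] abs_triangle_ineq)
  also have "\<dots> \<le> (\<bar>M$1$1\<bar> * norm x + \<bar>M$1$2\<bar> * norm x) + (\<bar>M$2$1\<bar> * norm x + \<bar>M$2$2\<bar> * norm x)"
    using c by (intro add_mono mult_left_mono) auto
  finally show ?thesis by (simp add: entry_sum_def algebra_simps)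
qed

lemma norm_le_entry_sum_mult_vec:
  assumes "\<bar>det M\<bar> = 1"
  shows "norm x \<le> entry_sum M * norm (M *v x)"
proof -
  let ?y = "M *v x"
  have c: "\<bar>?y$1\<bar> \<le> norm ?y" "\<bar>?y$2\<bar> \<le> norm ?y" by (rule component_le_norm_cart)+
  have "det M * x$1 = M$2$2 * ?y$1 - M$1$2 * ?y$2"
    by (simp add: mat2_mult_vec_nth det_2 algebra_simps)
  moreover have "\<bar>x$1\<bar> = \<bar>det M * x$1\<bar>"
    using assms by (simp add: abs_mult)
  ultimately have "\<bar>x$1\<bar> = \<bar>M$2$2 * ?y$1 - M$1$2 * ?y$2\<bar>" by simp
  also have "\<dots> \<le> \<bar>M$2$2\<bar> * \<bar>?y$1\<bar> + \<bar>M$1$2\<bar> * \<bar>?y$2\<bar>"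
    by (rule order_trans[OF abs_triangle_ineq4]) (simp add: abs_mult)
  also have "\<dots> \<le> \<bar>M$2$2\<bar> * norm ?y + \<bar>M$1$2\<bar> * norm ?y"
    using c by (intro add_mono mult_left_mono) auto
  finally have x1: "\<bar>x$1\<bar> \<le> \<bar>M$2$2\<bar> * norm ?y + \<bar>M$1$2\<bar> * norm ?y" .
  have "det M * x$2 = M$1$1 * ?y$2 - M$2$1 * ?y$1"
    by (simp add: mat2_mult_vec_nth det_2 algebra_simps)
  moreover have "\<bar>x$2\<bar> = \<bar>det M * x$2\<bar>"
    using assms by (simp add: abs_mult)
  ultimately have "\<bar>x$2\<bar> = \<bar>M$1$1 * ?y$2 - M$2$1 * ?y$1\<bar>" by simp
  also have "\<dots> \<le> \<bar>M$1$1\<bar> * \<bar>?y$2\<bar> + \<bar>M$2$1\<bar> * \<bar>?y$1\<bar>"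
    by (rule order_trans[OF abs_triangle_ineq4]) (simp add: abs_mult)
  also have "\<dots> \<le> \<bar>M$1$1\<bar> * norm ?y + \<bar>M$2$1\<bar> * norm ?y"
    using c by (intro add_mono mult_left_mono) auto
  finally have x2: "\<bar>x$2\<bar> \<le> \<bar>M$1$1\<bar> * norm ?y + \<bar>M$2$1\<bar> * norm ?y" .
  show ?thesis
    using norm_vec2_le_abs_sum[of x] x1 x2 unfolding entry_sum_def by (simp add: algebra_simps)
qed

lemma abs_entry_diff_le_mnorm: "\<bar>B$k$l - A$k$l\<bar> \<le> mnorm (B - A)"
  using abs_entry_le_mnorm[of "B - A" k l] by simp

lemma entry_sum_le_add_mnorm: "entry_sum B \<le> entry_sum A + 4 * mnorm (B - A)"
proof -
  have entry: "\<bar>B$k$l\<bar> \<le> \<bar>A$k$l\<bar> + mnorm (B - A)" for k l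
    using abs_entry_diff_le_mnorm[of B k l A] by linarith
  show ?thesis
    using entry[of 1 1] entry[of 1 2] entry[of 2 1] entry[of 2 2] unfolding entry_sum_def by linarith
qed

lemma abs_trace_diff_le: "\<bar>trace B - trace A\<bar> \<le> 2 * mnorm (B - A)"
  using abs_entry_diff_le_mnorm[of B 1 1 A] abs_entry_diff_le_mnorm[of B 2 2 A]
  unfolding trace_mat2 by linarith

lemma abs_det_diff_le:
  assumes "mnorm (B - A) \<le> 1"
  shows "\<bar>det B - det A\<bar> \<le> mnorm (B - A) * (entry_sum A + 2)"
proof -
  let ?d = "mnorm (B - A)"
  have prod: "\<bar>B$i$j * B$k$l - A$i$j * A$k$l\<bar> \<le> ?d * (\<bar>A$k$l\<bar> + 1) + \<bar>A$i$j\<bar> * ?d"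
    for i j k l
  proof -
    have "B$i$j * B$k$l - A$i$j * A$k$l = (B$i$j - A$i$j) * B$k$l + A$i$j * (B$k$l - A$k$l)"
      by (simp add: algebra_simps)
    then have "\<bar>B$i$j * B$k$l - A$i$j * A$k$l\<bar> \<le> \<bar>B$i$j - A$i$j\<bar> * \<bar>B$k$l\<bar> + \<bar>A$i$j\<bar> * \<bar>B$k$l - A$k$l\<bar>"
      by (simp add: abs_mult[symmetric] abs_triangle_ineq)
    also have "\<dots> \<le> ?d * (\<bar>A$k$l\<bar> + 1) + \<bar>A$i$j\<bar> * ?d"
      using abs_entry_diff_le_mnorm[of B i j A] abs_entry_diff_le_mnorm[of B k l A] assms
      by (intro add_mono mult_mono mult_left_mono) auto
    finally show ?thesis .
  qed
  have "\<bar>det B - det A\<bar> \<le> \<bar>B$1$1 * B$2$2 - A$1$1 * A$2$2\<bar> + \<bar>B$1$2 * B$2$1 - A$1$2 * A$2$1\<bar>"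
    unfolding det_2 by linarith
  also have "\<dots> \<le> ?d * (entry_sum A + 2)"
    using prod[of 1 1 2 2] prod[of 1 2 2 1] unfolding entry_sum_def by (simp add: algebra_simps)
  finally show ?thesis .
qed

section \<open>Hyperbolic matrices\<close>

lemma matrix_inv_mult:
  fixes M :: mat2
  assumes "det M \<noteq> 0"
  shows "M ** matrix_inv M = mat 1" and "matrix_inv M ** M = mat 1"
proof -
  have "\<exists>M'. M ** M' = mat 1 \<and> M' ** M = mat 1"
    using assms invertible_det_nz unfolding invertible_def by blast
  then have "M ** matrix_inv M = mat 1 \<and> matrix_inv M ** M = mat 1"
    unfolding matrix_inv_def by (rule someI_ex)
  then show "M ** matrix_inv M = mat 1" and "matrix_inv M ** M = mat 1" by auto
qed

lemma matrix_inv_mult_vec: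
  fixes M :: mat2
  assumes "det M \<noteq> 0"
  shows "M *v (matrix_inv M *v x) = x" and "matrix_inv M *v (M *v x) = x"
  using matrix_inv_mult[OF assms] by (simp_all add: matrix_vector_mul_assoc)

lemma exists_matrix_eigenbasis:
  assumes "det2 x y \<noteq> 0"
  obtains N :: mat2 where "N *v x = a *\<^sub>R x" "N *v y = b *\<^sub>R y" "det N = a * b"
proof -
  define f where "f z = (det2 z y / det2 x y * a) *\<^sub>R x + (det2 x z / det2 x y * b) *\<^sub>R y" for z
  have "linear f"
    by (rule linearI) (simp_all add: f_def det2_add_left det2_add_right add_divide_distrib
        scaleR_add_left algebra_simps)
  then have N: "matrix f *v z = f z" for z
    by (simp add: matrix_works)
  have Nx: "matrix f *v x = a *\<^sub>R x" and Ny: "matrix f *v y = b *\<^sub>R y"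
    using assms unfolding N f_def by simp_all
  have "det (matrix f) * det2 x y = det2 (matrix f *v x) (matrix f *v y)"
    by (rule det2_mult_vec[symmetric])
  also have "\<dots> = a * b * det2 x y"
    unfolding Nx Ny by simp
  finally have "det (matrix f) = a * b"
    using assms by simp
  then show ?thesis
    using that Nx Ny by blast
qed

lemma eigenvector_exists:
  fixes M :: mat2
  assumes "r\<^sup>2 - trace M * r + det M = 0"
  shows "\<exists>v. v \<noteq> 0 \<and> M *v v = r *\<^sub>R v"
proof -
  have q: "(r - M$1$1) * (r - M$2$2) = M$1$2 * M$2$1"
    using assms by (simp add: trace_mat2 det_2 power2_eq_square algebra_simps)
  consider "M$1$2 \<noteq> 0" | "M$1$2 = 0" "M$2$1 \<noteq> 0" | "M$1$2 = 0" "M$2$1 = 0" "r = M$1$1"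
    | "M$1$2 = 0" "M$2$1 = 0" "r = M$2$2"
  proof (cases "M$1$2 = 0 \<and> M$2$1 = 0")
    case True
    then have "r = M$1$1 \<or> r = M$2$2" using q by simp
    then show ?thesis using True that(3,4) by blast
  qed (use that(1,2) in blast)
  then show ?thesis
  proof cases
    case 1
    then show ?thesis
      using q by (intro exI[of _ "vector [M$1$2, r - M$1$1]"])
        (simp add: vec2_eq_iff mat2_mult_vec_nth algebra_simps)
  next
    case 2
    then show ?thesis
      using q by (intro exI[of _ "vector [r - M$2$2, M$2$1]"])
        (simp add: vec2_eq_iff mat2_mult_vec_nth algebra_simps)
  next
    case 3
    then show ?thesis
      by (intro exI[of _ "vector [1, 0]"]) (simp add: vec2_eq_iff mat2_mult_vec_nth)
  next
    case 4
    then show ?thesis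
      by (intro exI[of _ "vector [0, 1]"]) (simp add: vec2_eq_iff mat2_mult_vec_nth)
  qed
qed

lemma hyperbolic_if_trace_gt:
  fixes M :: mat2
  assumes det: "\<bar>det M\<bar> = 1" and tr: "(trace M)\<^sup>2 > (1 + det M)\<^sup>2"
  shows "hyperbolic M"
proof -
  define T D where "T = trace M" and "D = det M"
  have "T\<^sup>2 - 4 * D = (T\<^sup>2 - (1 + D)\<^sup>2) + (1 - D)\<^sup>2"
    by (simp add: power2_eq_square algebra_simps)
  then have disc: "T\<^sup>2 - 4 * D > 0"
    using tr zero_le_power2[of "1 - D"] unfolding T_def D_def by linarith
  define s where "s = sqrt (T\<^sup>2 - 4 * D)"
  have s2: "s\<^sup>2 = T\<^sup>2 - 4 * D" unfolding s_def using disc by simp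
  define r1 r2 where "r1 = (T + s) / 2" and "r2 = (T - s) / 2"
  have roots: "r1\<^sup>2 - T * r1 + D = 0" "r2\<^sup>2 - T * r2 + D = 0"
    unfolding r1_def r2_def using s2 by (simp_all add: power2_eq_square field_simps)
  have prod: "\<bar>r1\<bar> * \<bar>r2\<bar> = 1"
    using s2 det unfolding r1_def r2_def D_def
    by (simp add: abs_mult[symmetric] power2_eq_square field_simps)
  have "\<bar>r1\<bar> \<noteq> 1"
  proof
    assume "\<bar>r1\<bar> = 1"
    then have "r1 * r1 = 1" using abs_mult_self_eq[of r1] by simp
    moreover have "r1 + r2 = T" "r1 * r2 = D"
      unfolding r1_def r2_def using s2 by (simp_all add: power2_eq_square field_simps)
    ultimately have "T = r1 * (1 + D)"
      by (metis distrib_left mult.assoc mult.commute mult_1)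
    then have "T\<^sup>2 = (1 + D)\<^sup>2"
      using \<open>r1 * r1 = 1\<close> by (simp add: power2_eq_square algebra_simps)
    then show False using tr unfolding T_def D_def by simp
  qed
  moreover have "\<bar>r1\<bar> > 0"
    using prod by (cases "r1 = 0") auto
  moreover have "\<bar>r2\<bar> = 1 / \<bar>r1\<bar>"
    using prod calculation(2) by (simp add: field_simps)
  ultimately have "\<bar>r1\<bar> > 1 \<and> \<bar>r2\<bar> < 1 \<or> \<bar>r2\<bar> > 1 \<and> \<bar>r1\<bar> < 1"
    by (auto simp: divide_less_eq_1_pos less_divide_eq_1_pos)
  moreover obtain u v where "u \<noteq> 0" "M *v u = r1 *\<^sub>R u" "v \<noteq> 0" "M *v v = r2 *\<^sub>R v"
    using eigenvector_exists[of r1 M] eigenvector_exists[of r2 M] roots unfolding T_def D_def by blast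
  ultimately show ?thesis
    unfolding hyperbolic_def by blast
qed

lemma edir_plus_eigenvector:
  assumes "hyperbolic M"
  obtains l where "edir_plus M \<noteq> 0" "\<bar>l\<bar> > 1" "M *v edir_plus M = l *\<^sub>R edir_plus M"
proof -
  have "\<exists>v. v \<noteq> 0 \<and> (\<exists>l. \<bar>l\<bar> > 1 \<and> M *v v = l *\<^sub>R v)"
    using assms unfolding hyperbolic_def by blast
  then have "edir_plus M \<noteq> 0 \<and> (\<exists>l. \<bar>l\<bar> > 1 \<and> M *v edir_plus M = l *\<^sub>R edir_plus M)"
    unfolding edir_plus_def by (rule someI_ex)
  then show ?thesis using that by blast
qed

lemma edir_minus_eigenvector:
  assumes "hyperbolic M"
  obtains l where "edir_minus M \<noteq> 0" "\<bar>l\<bar> < 1" "M *v edir_minus M = l *\<^sub>R edir_minus M"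
proof -
  have "\<exists>v. v \<noteq> 0 \<and> (\<exists>l. \<bar>l\<bar> < 1 \<and> M *v v = l *\<^sub>R v)"
    using assms unfolding hyperbolic_def by blast
  then have "edir_minus M \<noteq> 0 \<and> (\<exists>l. \<bar>l\<bar> < 1 \<and> M *v edir_minus M = l *\<^sub>R edir_minus M)"
    unfolding edir_minus_def by (rule someI_ex)
  then show ?thesis using that by blast
qed

lemma edir_eigenvectors:
  assumes "hyperbolic M"
  shows "edir_plus M \<noteq> 0 \<and> (\<exists>l. \<bar>l\<bar> \<noteq> 1 \<and> M *v edir_plus M = l *\<^sub>R edir_plus M)"
    and "edir_minus M \<noteq> 0 \<and> (\<exists>l. \<bar>l\<bar> \<noteq> 1 \<and> M *v edir_minus M = l *\<^sub>R edir_minus M)"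
  by (rule edir_plus_eigenvector[OF assms]; auto) (rule edir_minus_eigenvector[OF assms]; auto)

lemma eigenvectors_parallel_if_third_eigenvalue:
  fixes M :: mat2
  assumes "M *v v1 = l1 *\<^sub>R v1" "M *v v2 = l2 *\<^sub>R v2" "M *v v3 = l3 *\<^sub>R v3"
    and "v3 \<noteq> 0" "l1 \<noteq> l3" "l2 \<noteq> l3"
  shows "det2 v1 v2 = 0"
proof (rule ccontr)
  assume D: "det2 v1 v2 \<noteq> 0"
  define s t where "s = det2 v3 v2 / det2 v1 v2" and "t = det2 v1 v3 / det2 v1 v2"
  have v3: "v3 = s *\<^sub>R v1 + t *\<^sub>R v2"
    unfolding s_def t_def by (rule vec2_decompose[OF D])
  have "M *v v3 = (s * l1) *\<^sub>R v1 + (t * l2) *\<^sub>R v2"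
    by (subst v3) (simp add: matrix_vector_right_distrib matrix_vector_mult_scaleR assms(1,2))
  moreover have "M *v v3 = (l3 * s) *\<^sub>R v1 + (l3 * t) *\<^sub>R v2"
    using assms(3) by (subst (asm) v3) (simp add: algebra_simps)
  ultimately have "(s * (l1 - l3)) *\<^sub>R v1 + (t * (l2 - l3)) *\<^sub>R v2 = 0"
    by (simp add: algebra_simps)
  then have "det2 ((s * (l1 - l3)) *\<^sub>R v1 + (t * (l2 - l3)) *\<^sub>R v2) v2 = 0"
    and "det2 v1 ((s * (l1 - l3)) *\<^sub>R v1 + (t * (l2 - l3)) *\<^sub>R v2) = 0"
    by (simp_all add: det2_def)
  then have "s * (l1 - l3) = 0" "t * (l2 - l3) = 0"
    using D by (simp_all add: det2_add_left det2_add_right det2_swap[of v2 v1])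
  then show False
    using v3 assms(4-6) by simp
qed

lemma eigenvector_left_inverse:
  fixes P Q :: mat2
  assumes "\<And>x. P *v (Q *v x) = x" "Q *v v = l *\<^sub>R v" "v \<noteq> 0"
  shows "l \<noteq> 0" and "P *v v = (1 / l) *\<^sub>R v"
proof -
  have v: "v = l *\<^sub>R (P *v v)"
    using assms(1)[of v] assms(2) by (simp add: matrix_vector_mult_scaleR)
  then show "l \<noteq> 0" using assms(3) by auto
  then show "P *v v = (1 / l) *\<^sub>R v"
    by (subst (2) v) simp
qed

lemma hyperbolic_matrix_inv:
  fixes M :: mat2
  assumes "hyperbolic M" "det M \<noteq> 0"
  shows "hyperbolic (matrix_inv M)"
    and "\<exists>c. c \<noteq> 0 \<and> edir_minus (matrix_inv M) = c *\<^sub>R edir_plus M"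
proof -
  note inv_eig = eigenvector_left_inverse[OF matrix_inv_mult_vec(2)[OF assms(2)]]
  obtain lp where p: "edir_plus M \<noteq> 0" "\<bar>lp\<bar> > 1" "M *v edir_plus M = lp *\<^sub>R edir_plus M"
    using edir_plus_eigenvector[OF assms(1)] .
  obtain lm where m: "edir_minus M \<noteq> 0" "\<bar>lm\<bar> < 1" "M *v edir_minus M = lm *\<^sub>R edir_minus M"
    using edir_minus_eigenvector[OF assms(1)] .
  have "\<bar>1 / lm\<bar> > 1" "\<bar>1 / lp\<bar> < 1"
    using inv_eig(1)[OF m(3,1)] m(2) p(2) by (simp_all add: abs_divide less_divide_eq_1_pos)
  then show hyp: "hyperbolic (matrix_inv M)"
    unfolding hyperbolic_def using m(1) p(1) inv_eig(2)[OF m(3,1)] inv_eig(2)[OF p(3,1)] by blast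
  obtain l where w: "edir_minus (matrix_inv M) \<noteq> 0" "\<bar>l\<bar> < 1"
    "matrix_inv M *v edir_minus (matrix_inv M) = l *\<^sub>R edir_minus (matrix_inv M)"
    using edir_minus_eigenvector[OF hyp] .
  note M_eig = eigenvector_left_inverse[OF matrix_inv_mult_vec(1)[OF assms(2)] w(3,1)]
  have "\<bar>1 / l\<bar> > 1"
    using M_eig(1) w(2) by (simp add: abs_divide less_divide_eq_1_pos)
  then have "lp \<noteq> lm" "1 / l \<noteq> lm"
    using p(2) m(2) by auto
  then have "det2 (edir_plus M) (edir_minus (matrix_inv M)) = 0"
    using eigenvectors_parallel_if_third_eigenvalue[OF p(3) M_eig(2) m(3,1)] by blast
  then obtain c where "edir_minus (matrix_inv M) = c *\<^sub>R edir_plus M"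
    using parallel_iff_det2_eq_0[OF p(1)] by blast
  then show "\<exists>c. c \<noteq> 0 \<and> edir_minus (matrix_inv M) = c *\<^sub>R edir_plus M"
    using w(1) by (intro exI[of _ c]) auto
qed

section \<open>Perturbing matrices with two invariant lines\<close>

lemma abs_det2_mult_vec_le_pdist:
  assumes "norm x = 1"
  shows "\<bar>det2 (M *v x) x\<bar> \<le> entry_sum M * pdist (M *v x) x"
proof (cases "M *v x = 0")
  case False
  moreover have "x \<noteq> 0"
    using assms by auto
  ultimately have "\<bar>det2 (M *v x) x\<bar> = pdist (M *v x) x * norm (M *v x)"
    using assms pdist_eq_det2[of "M *v x" x] by simp
  also have "\<dots> \<le> pdist (M *v x) x * entry_sum M"
    using norm_mult_vec_le_entry_sum[of M x] assms by (intro mult_left_mono) (simp_all add: pdist_def)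
  finally show ?thesis by (simp add: mult.commute)
qed (simp add: entry_sum_nonneg pdist_zero_left)

lemma abs_det2_mult_vec_sgn_le:
  assumes "v \<noteq> 0"
  shows "\<bar>det2 (M *v sgn v) (sgn v)\<bar> \<le> entry_sum M * pdist (M *v v) v"
proof -
  have "pdist (M *v sgn v) (sgn v) = pdist (M *v v) v"
    unfolding sgn_div_norm matrix_vector_mult_scaleR using assms by (intro pdist_scaleR) auto
  then show ?thesis
    using abs_det2_mult_vec_le_pdist[of "sgn v" M] assms by (simp add: norm_sgn)
qed

lemma sgn_eigenvector:
  fixes M :: mat2
  shows "M *v v = l *\<^sub>R v \<Longrightarrow> M *v sgn v = l *\<^sub>R sgn v"
  by (simp add: sgn_div_norm matrix_vector_mult_scaleR scaleR_left_commute)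

lemma det2_mult_vec_self_eigenbasis:
  fixes M :: mat2
  assumes "M *v e = a *\<^sub>R e" "M *v f = c *\<^sub>R f" "det2 e f \<noteq> 0"
  shows "det2 (M *v v) v = (a - c) * det2 v f * det2 e v / det2 e f"
proof -
  define s t where "s = det2 v f / det2 e f" and "t = det2 e v / det2 e f"
  have v: "v = s *\<^sub>R e + t *\<^sub>R f"
    unfolding s_def t_def by (rule vec2_decompose[OF assms(3)])
  have Mv: "M *v v = (s * a) *\<^sub>R e + (t * c) *\<^sub>R f"
    by (subst v) (simp add: matrix_vector_right_distrib matrix_vector_mult_scaleR assms(1,2))
  have "det2 (M *v v) v = s * t * (a - c) * det2 e f"
    unfolding Mv by (subst v) (simp add: det2_add_left det2_add_right det2_swap[of f e] algebra_simps)
  also have "\<dots> = (a - c) * det2 v f * det2 e v / det2 e f"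
    unfolding s_def t_def using assms(3) by (simp add: field_simps power2_eq_square)
  finally show ?thesis .
qed

lemma abs_det2_mult_vec_self_le:
  "\<bar>det2 (B *v v) v\<bar> \<le> \<bar>det2 (A *v v) v\<bar> + mnorm (B - A) * (norm v)\<^sup>2"
proof -
  have "det2 (B *v v) v = det2 (A *v v) v + det2 ((B - A) *v v) v"
    by (simp add: matrix_vector_mult_diff_rdistrib det2_def algebra_simps)
  moreover have "\<bar>det2 ((B - A) *v v) v\<bar> \<le> norm ((B - A) *v v) * norm v"
    by (rule abs_det2_le)
  moreover have "norm ((B - A) *v v) * norm v \<le> mnorm (B - A) * norm v * norm v"
    by (intro mult_right_mono norm_mult_vec_le_mnorm) simp
  ultimately show ?thesis
    by (simp add: power2_eq_square mult.assoc)
qed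

lemma pdist_le_entry_sum_det2:
  assumes "\<bar>det M\<bar> = 1" "v \<noteq> 0"
  shows "pdist (M *v v) v \<le> entry_sum M * \<bar>det2 (M *v v) v\<bar> / (norm v)\<^sup>2"
proof -
  have le: "norm v \<le> entry_sum M * norm (M *v v)"
    by (rule norm_le_entry_sum_mult_vec[OF assms(1)])
  then have Mv: "M *v v \<noteq> 0" and S: "entry_sum M > 0"
    using assms(2) entry_sum_nonneg[of M] by (auto simp: order_le_less)
  have "pdist (M *v v) v = \<bar>det2 (M *v v) v\<bar> / (norm (M *v v) * norm v)"
    by (rule pdist_eq_det2[OF Mv assms(2)])
  also have "\<dots> \<le> \<bar>det2 (M *v v) v\<bar> / (norm v / entry_sum M * norm v)"
    using le S assms(2) Mv by (intro divide_left_mono mult_right_mono) (auto simp: field_simps)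
  also have "\<dots> = entry_sum M * \<bar>det2 (M *v v) v\<bar> / (norm v)\<^sup>2"
    using S by (simp add: power2_eq_square)
  finally show ?thesis .
qed

lemma eigenvalue_gap_mult_det2_le:
  fixes M N :: mat2
  assumes "N *v e = a *\<^sub>R e" "a \<noteq> 0" "a * c = det N" "M *v v = l *\<^sub>R v"
  shows "\<bar>l - c\<bar> * \<bar>det2 e v\<bar> \<le> norm e * mnorm (M - N) * norm v"
proof -
  have "a * det2 e (N *v v) = a * (c * det2 e v)"
    using det2_mult_vec[of N e v] assms(1,3) by simp
  then have "det2 e (N *v v) = c * det2 e v"
    using assms(2) by simp
  then have "(l - c) * det2 e v = det2 e ((M - N) *v v)"
    by (simp add: matrix_vector_mult_diff_rdistrib det2_diff_right assms(4) algebra_simps)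
  then have "\<bar>l - c\<bar> * \<bar>det2 e v\<bar> \<le> norm e * norm ((M - N) *v v)"
    using abs_det2_le[of e "(M - N) *v v"] by (simp add: abs_mult)
  also have "\<dots> \<le> norm e * (mnorm (M - N) * norm v)"
    by (intro mult_left_mono norm_mult_vec_le_mnorm) simp
  finally show ?thesis by (simp add: mult.assoc)
qed

lemma pdist_le_near_eigenline:
  fixes M N :: mat2
  assumes N: "N *v e = a *\<^sub>R e" "N *v f = c *\<^sub>R f" "det2 e f \<noteq> 0"
    and unit: "norm e = 1" "norm f = 1"
    and M: "\<bar>det M\<bar> = 1" and v: "v \<noteq> 0"
    and near: "\<bar>det2 e v\<bar> \<le> \<delta> * norm v \<or> \<bar>det2 f v\<bar> \<le> \<delta> * norm v"
  shows "pdist (M *v v) v \<le> entry_sum M * (\<bar>a - c\<bar> / \<bar>det2 e f\<bar> * \<delta> + mnorm (M - N))"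
proof -
  have "\<bar>det2 v f\<bar> \<le> norm v" "\<bar>det2 e v\<bar> \<le> norm v"
    using abs_det2_le[of v f] abs_det2_le[of e v] unit by simp_all
  then have "\<bar>det2 v f\<bar> * \<bar>det2 e v\<bar> \<le> \<delta> * (norm v)\<^sup>2"
    using near by (auto simp: det2_swap[of v f] power2_eq_square mult.commute
        intro: order_trans[OF mult_mono] mult_left_mono)
  then have "\<bar>a - c\<bar> / \<bar>det2 e f\<bar> * (\<bar>det2 v f\<bar> * \<bar>det2 e v\<bar>)
      \<le> \<bar>a - c\<bar> / \<bar>det2 e f\<bar> * (\<delta> * (norm v)\<^sup>2)"
    by (rule mult_left_mono) simp
  then have "\<bar>det2 (N *v v) v\<bar> \<le> \<bar>a - c\<bar> / \<bar>det2 e f\<bar> * \<delta> * (norm v)\<^sup>2"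
    unfolding det2_mult_vec_self_eigenbasis[OF N] by (simp add: abs_mult abs_divide mult.assoc)
  then have "\<bar>det2 (M *v v) v\<bar> \<le> (\<bar>a - c\<bar> / \<bar>det2 e f\<bar> * \<delta> + mnorm (M - N)) * (norm v)\<^sup>2"
    using abs_det2_mult_vec_self_le[of M v N] by (simp add: algebra_simps)
  then have "entry_sum M * \<bar>det2 (M *v v) v\<bar> / (norm v)\<^sup>2
      \<le> entry_sum M * ((\<bar>a - c\<bar> / \<bar>det2 e f\<bar> * \<delta> + mnorm (M - N)) * (norm v)\<^sup>2) / (norm v)\<^sup>2"
    by (intro divide_right_mono mult_left_mono) (simp_all add: entry_sum_nonneg)
  then show ?thesis
    using pdist_le_entry_sum_det2[OF M v] v by simp
qed

lemma pdist_mult_vec_le_matrix_inv: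
  fixes M :: mat2
  assumes M: "\<bar>det M\<bar> = 1" and v: "v \<noteq> 0"
  shows "pdist (M *v v) v \<le> (entry_sum M)\<^sup>2 * pdist (matrix_inv M *v v) v"
proof -
  let ?w = "matrix_inv M *v v" and ?S = "entry_sum M"
  have Mw: "M *v ?w = v"
    using M by (intro matrix_inv_mult_vec(1)) auto
  have w: "?w \<noteq> 0" and nw: "norm ?w \<le> ?S * norm v"
    using Mw v norm_le_entry_sum_mult_vec[OF M, of ?w] by auto
  then have S: "?S > 0"
    using v entry_sum_nonneg[of M] by (cases "?S = 0") auto
  have "\<bar>det2 ?w v\<bar> = \<bar>det2 (M *v ?w) (M *v v)\<bar>"
    using M by (simp add: det2_mult_vec abs_mult)
  then have det: "\<bar>det2 ?w v\<bar> = \<bar>det2 (M *v v) v\<bar>"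
    by (simp add: Mw det2_swap[of v])
  have "pdist (M *v v) v \<le> ?S * \<bar>det2 (M *v v) v\<bar> / (norm v)\<^sup>2"
    by (rule pdist_le_entry_sum_det2[OF M v])
  also have "\<dots> = ?S\<^sup>2 * (\<bar>det2 ?w v\<bar> / (?S * norm v * norm v))"
    using S det by (simp add: power2_eq_square)
  also have "\<dots> \<le> ?S\<^sup>2 * (\<bar>det2 ?w v\<bar> / (norm ?w * norm v))"
    using nw w v S by (intro mult_left_mono divide_left_mono mult_right_mono) auto
  also have "\<dots> = ?S\<^sup>2 * pdist ?w v"
    using pdist_eq_det2[OF w v] by simp
  finally show ?thesis .
qed

lemma abs_det2_unit_ge:
  assumes "norm e = 1" "norm f = 1" "norm x = 1" "det2 e f \<noteq> 0"
  shows "\<bar>det2 e f\<bar> - \<bar>det2 e x\<bar> \<le> \<bar>det2 f x\<bar>"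
proof -
  define s t where "s = det2 x f / det2 e f" and "t = det2 e x / det2 e f"
  have x: "x = s *\<^sub>R e + t *\<^sub>R f"
    unfolding s_def t_def by (rule vec2_decompose[OF assms(4)])
  have "1 \<le> \<bar>s\<bar> + \<bar>t\<bar>"
    using norm_triangle_ineq[of "s *\<^sub>R e" "t *\<^sub>R f"] assms(1-3) x by simp
  moreover have "\<bar>det2 f x\<bar> = \<bar>s\<bar> * \<bar>det2 e f\<bar>" "\<bar>det2 e x\<bar> = \<bar>t\<bar> * \<bar>det2 e f\<bar>"
    using assms(4) by (subst x; simp add: det2_add_right det2_swap[of f e] abs_mult)+
  moreover have "(1 - \<bar>t\<bar>) * \<bar>det2 e f\<bar> \<le> \<bar>s\<bar> * \<bar>det2 e f\<bar>"
    using calculation(1) by (intro mult_right_mono) auto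
  ultimately show ?thesis
    by (simp add: algebra_simps)
qed

lemma abs_det2_ge_if_near:
  assumes unit: "norm e = 1" "norm f = 1" "norm x = 1" "norm y = 1" and D: "det2 e f \<noteq> 0"
    and near: "\<bar>det2 e x\<bar> \<le> \<eta>" "\<bar>det2 f y\<bar> \<le> \<eta>" "\<eta> \<le> \<bar>det2 e f\<bar>"
  shows "\<bar>det2 e f\<bar> - 2 * \<eta> \<le> \<bar>det2 x y\<bar>"
proof -
  let ?D = "\<bar>det2 e f\<bar>"
  have "?D - \<eta> \<le> \<bar>det2 f x\<bar>"
    using abs_det2_unit_ge[OF unit(1-3) D] near(1) by linarith
  moreover have "?D - \<eta> \<le> \<bar>det2 e y\<bar>"
    using abs_det2_unit_ge[OF unit(2,1,4)] D near(2) by (simp add: det2_swap[of f e])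
  ultimately have "(?D - \<eta>) * (?D - \<eta>) \<le> \<bar>det2 e y * det2 f x\<bar>"
    using near(3) unfolding abs_mult by (intro mult_mono) auto
  moreover have "\<bar>det2 e x * det2 f y\<bar> \<le> \<eta> * \<eta>"
    using near(1,2) unfolding abs_mult by (intro mult_mono) auto
  moreover have "?D * \<bar>det2 x y\<bar> = \<bar>det2 e x * det2 f y - det2 e y * det2 f x\<bar>"
    by (simp add: det2_Pluecker abs_mult)
  moreover have "(?D - \<eta>) * (?D - \<eta>) - \<eta> * \<eta> = ?D * (?D - 2 * \<eta>)"
    by (simp add: algebra_simps)
  ultimately have "?D * (?D - 2 * \<eta>) \<le> ?D * \<bar>det2 x y\<bar>"
    using abs_triangle_ineq2_sym[of "det2 e y * det2 f x" "det2 e x * det2 f y"] by linarith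
  then show ?thesis
    using D by simp
qed

lemma det_in_basis:
  fixes M :: mat2
  assumes "det2 x y \<noteq> 0" "M *v x = a *\<^sub>R x + c *\<^sub>R y" "M *v y = b *\<^sub>R x + d *\<^sub>R y"
  shows "det M = a * d - b * c"
proof -
  have "det M * det2 x y = (a * d - b * c) * det2 x y"
    unfolding det2_mult_vec[symmetric] assms(2,3)
    by (simp add: det2_add_left det2_add_right det2_swap[of y x] algebra_simps)
  then show ?thesis
    using assms(1) by simp
qed

lemma abs_off_diagonal_ratio_le:
  fixes a b c d S \<delta> t :: real
  assumes det: "\<bar>a * d - b * c\<bar> = 1" and bc: "\<bar>b\<bar> \<le> t" "\<bar>c\<bar> \<le> t" "t \<le> 1/2"
    and d: "\<bar>d\<bar> \<le> S / \<delta>" and \<delta>: "0 < \<delta>"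
  shows "a \<noteq> 0" and "\<bar>b * c / a\<bar> \<le> t * (2 * S / (3 * \<delta>))"
proof -
  have t: "0 \<le> t"
    using bc(1) by linarith
  have bc': "\<bar>b\<bar> * \<bar>c\<bar> \<le> t * (1/2)"
    using bc t by (intro mult_mono) auto
  have "1 \<le> \<bar>a\<bar> * \<bar>d\<bar> + \<bar>b\<bar> * \<bar>c\<bar>"
    using det abs_triangle_ineq4[of "a * d" "b * c"] by (simp add: abs_mult)
  also have "\<dots> \<le> \<bar>a\<bar> * (S / \<delta>) + 1/4"
    using d bc' bc(3) by (intro add_mono mult_left_mono) auto
  finally have ad: "3/4 \<le> \<bar>a\<bar> * (S / \<delta>)"
    by linarith
  have S: "0 < S"
  proof (rule ccontr)
    assume "\<not> 0 < S"
    then have "\<bar>a\<bar> * (S / \<delta>) \<le> 0"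
      using \<delta> by (simp add: divide_nonpos_pos mult_nonneg_nonpos)
    then show False
      using ad by linarith
  qed
  then have a: "3 * \<delta> / (4 * S) \<le> \<bar>a\<bar>" and "0 < 3 * \<delta> / (4 * S)"
    using ad \<delta> by (simp_all add: field_simps)
  then show "a \<noteq> 0"
    by auto
  have "\<bar>b * c / a\<bar> \<le> t * (1/2) / (3 * \<delta> / (4 * S))"
    unfolding abs_divide abs_mult using bc' a S \<delta> t by (intro frac_le) auto
  also have "\<dots> = t * (2 * S / (3 * \<delta>))"
    using S \<delta> by (simp add: field_simps)
  finally show "\<bar>b * c / a\<bar> \<le> t * (2 * S / (3 * \<delta>))" .
qed

text \<open>The new diagonal entry \<open>d - b c / a\<close> is forced by \<open>det N = det M = a d - b c\<close>.\<close>
lemma exists_diagonal_correction: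
  fixes M :: mat2
  assumes D: "det2 x y \<noteq> 0" and unit: "norm x = 1" "norm y = 1" and a: "a \<noteq> 0"
    and Mx: "M *v x = a *\<^sub>R x + c *\<^sub>R y" and My: "M *v y = b *\<^sub>R x + d *\<^sub>R y"
  obtains N where "N *v x = a *\<^sub>R x" "N *v y = (d - b * c / a) *\<^sub>R y" "det N = det M"
    "mnorm (M - N) \<le> (\<bar>c\<bar> + \<bar>b\<bar> + \<bar>b * c / a\<bar>) / \<bar>det2 x y\<bar>"
proof -
  define k where "k = b * c / a"
  obtain N where Nx: "N *v x = a *\<^sub>R x" and Ny: "N *v y = (d - k) *\<^sub>R y"
    and "det N = a * (d - k)"
    using exists_matrix_eigenbasis[OF D] .
  then have "det N = det M"
    using a det_in_basis[OF D Mx My] unfolding k_def by (simp add: algebra_simps)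
  have "(M - N) *v x = c *\<^sub>R y" and "(M - N) *v y = b *\<^sub>R x + k *\<^sub>R y"
    by (simp_all add: matrix_vector_mult_diff_rdistrib Mx My Nx Ny algebra_simps)
  then have "norm ((M - N) *v x) * norm y + norm x * norm ((M - N) *v y) \<le> \<bar>c\<bar> + \<bar>b\<bar> + \<bar>k\<bar>"
    using unit norm_triangle_ineq[of "b *\<^sub>R x" "k *\<^sub>R y"] by simp
  then have "mnorm (M - N) \<le> (\<bar>c\<bar> + \<bar>b\<bar> + \<bar>k\<bar>) / \<bar>det2 x y\<bar>"
    using mnorm_le_basis[OF D, of "M - N"] divide_right_mono[of _ _ "\<bar>det2 x y\<bar>"] by fastforce
  then show ?thesis
    using that Nx Ny \<open>det N = det M\<close> unfolding k_def by blast
qed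

lemma exists_diagonal_near:
  fixes M :: mat2
  assumes unit: "norm x = 1" "norm y = 1" and \<delta>: "0 < \<delta>" "\<delta> \<le> \<bar>det2 x y\<bar>"
    and M: "\<bar>det M\<bar> = 1" "entry_sum M \<le> S"
    and almost: "\<bar>det2 (M *v x) x\<bar> \<le> \<eta>" "\<bar>det2 (M *v y) y\<bar> \<le> \<eta>" "\<eta> \<le> \<delta> / 2"
  obtains N a b where "N *v x = a *\<^sub>R x" "N *v y = b *\<^sub>R y" "det N = det M"
    "mnorm (M - N) \<le> \<eta> / \<delta>\<^sup>2 * (2 + 2 * S / (3 * \<delta>))"
proof -
  define D where "D = det2 x y"
  have D: "D \<noteq> 0" "\<delta> \<le> \<bar>D\<bar>"
    using \<delta> unfolding D_def by auto
  define a c b d where "a = det2 (M *v x) y / D" and "c = det2 x (M *v x) / D"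
    and "b = det2 (M *v y) y / D" and "d = det2 x (M *v y) / D"
  have Mx: "M *v x = a *\<^sub>R x + c *\<^sub>R y" and My: "M *v y = b *\<^sub>R x + d *\<^sub>R y"
    unfolding a_def b_def c_def d_def D_def by (rule vec2_decompose[OF D(1)[unfolded D_def]])+
  have \<eta>: "0 \<le> \<eta>" and half: "\<eta> / \<delta> \<le> 1/2"
    using almost \<delta> by (auto simp: field_simps)
  have c: "\<bar>c\<bar> \<le> \<eta> / \<delta>"
    using almost(1) D \<delta> \<eta> unfolding c_def abs_divide det2_swap[of x] by (intro frac_le) auto
  have b: "\<bar>b\<bar> \<le> \<eta> / \<delta>"
    using almost(2) D \<delta> \<eta> unfolding b_def abs_divide by (intro frac_le) auto
  have "\<bar>det2 x (M *v y)\<bar> \<le> S"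
    using abs_det2_le[of x "M *v y"] norm_mult_vec_le_entry_sum[of M y] unit M(2) by simp
  then have d: "\<bar>d\<bar> \<le> S / \<delta>"
    unfolding d_def abs_divide using D \<delta> order_trans[OF abs_ge_zero] by (intro frac_le) auto
  have "\<bar>a * d - b * c\<bar> = 1"
    using M(1) det_in_basis[OF D(1)[unfolded D_def] Mx My] by simp
  note ratio = abs_off_diagonal_ratio_le[OF this b c half d \<delta>(1)]
  have sum: "\<bar>c\<bar> + \<bar>b\<bar> + \<bar>b * c / a\<bar> \<le> \<eta> / \<delta> + \<eta> / \<delta> + \<eta> / \<delta> * (2 * S / (3 * \<delta>))"
    using b c ratio(2) by linarith
  have "0 \<le> \<eta> / \<delta> + \<eta> / \<delta> + \<eta> / \<delta> * (2 * S / (3 * \<delta>))"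
    by (rule order_trans[OF _ sum]) simp
  obtain N where N: "N *v x = a *\<^sub>R x" "N *v y = (d - b * c / a) *\<^sub>R y" "det N = det M"
    and MN: "mnorm (M - N) \<le> (\<bar>c\<bar> + \<bar>b\<bar> + \<bar>b * c / a\<bar>) / \<bar>D\<bar>"
    using exists_diagonal_correction[OF D(1)[unfolded D_def] unit ratio(1) Mx My] unfolding D_def .
  from MN have "mnorm (M - N) \<le> (\<bar>c\<bar> + \<bar>b\<bar> + \<bar>b * c / a\<bar>) / \<bar>D\<bar>" .
  also have "\<dots> \<le> (\<eta> / \<delta> + \<eta> / \<delta> + \<eta> / \<delta> * (2 * S / (3 * \<delta>))) / \<delta>"
    using sum \<open>0 \<le> \<eta> / \<delta> + \<eta> / \<delta> + \<eta> / \<delta> * (2 * S / (3 * \<delta>))\<close> D \<delta>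
    by (intro frac_le) auto
  also have "\<dots> = \<eta> / \<delta>\<^sup>2 * (2 + 2 * S / (3 * \<delta>))"
    using \<delta> by (simp add: field_simps power2_eq_square)
  finally show ?thesis
    using that N by blast
qed

lemma mnorm_le_dcoc: "mnorm (B j - A j) \<le> dcoc B A"
  unfolding dcoc_def by (intro Max_ge) auto

lemma dcoc_le: "(\<And>j. mnorm (B j - A j) \<le> r) \<Longrightarrow> dcoc B A \<le> r"
  unfolding dcoc_def by (subst Max_le_iff) auto

lemma dcoc_nonneg: "0 \<le> dcoc B A"
  using mnorm_le_dcoc[of B undefined A] mnorm_nonneg order_trans by blast

lemma dDiag_le_dcoc: "D \<in> Diag \<Longrightarrow> dDiag B \<le> dcoc B D"
  unfolding dDiag_def by (rule cInf_lower) (auto intro: bdd_belowI[where m=0] simp: dcoc_nonneg)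

lemma dDiag_le_if_almost_invariant:
  assumes unit: "norm x = 1" "norm y = 1" and \<delta>: "0 < \<delta>" "\<delta> \<le> \<bar>det2 x y\<bar>"
    and B: "B \<in> SL2k" "\<And>j. entry_sum (B j) \<le> S"
    and almost: "\<And>j. \<bar>det2 (B j *v x) x\<bar> \<le> \<eta>" "\<And>j. \<bar>det2 (B j *v y) y\<bar> \<le> \<eta>" "\<eta> \<le> \<delta> / 2"
  shows "dDiag B \<le> \<eta> / \<delta>\<^sup>2 * (2 + 2 * S / (3 * \<delta>))"
proof -
  have "\<forall>j. \<exists>N. (\<exists>a. N *v x = a *\<^sub>R x) \<and> (\<exists>b. N *v y = b *\<^sub>R y) \<and> \<bar>det N\<bar> = 1 \<and>
      mnorm (B j - N) \<le> \<eta> / \<delta>\<^sup>2 * (2 + 2 * S / (3 * \<delta>))"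
  proof
    fix j
    have "\<bar>det (B j)\<bar> = 1"
      using B(1) unfolding SL2k_def by blast
    then show "\<exists>N. (\<exists>a. N *v x = a *\<^sub>R x) \<and> (\<exists>b. N *v y = b *\<^sub>R y) \<and> \<bar>det N\<bar> = 1 \<and>
        mnorm (B j - N) \<le> \<eta> / \<delta>\<^sup>2 * (2 + 2 * S / (3 * \<delta>))"
      using exists_diagonal_near[OF unit \<delta> _ B(2) almost] by metis
  qed
  then obtain N where N: "\<And>j. \<exists>a. N j *v x = a *\<^sub>R x" "\<And>j. \<exists>b. N j *v y = b *\<^sub>R y"
    "\<And>j. \<bar>det (N j)\<bar> = 1" "\<And>j. mnorm (B j - N j) \<le> \<eta> / \<delta>\<^sup>2 * (2 + 2 * S / (3 * \<delta>))"
    by metis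
  have "x \<noteq> 0" "y \<noteq> 0" "det2 x y \<noteq> 0"
    using unit \<delta> by auto
  then have "inv_line N x" "inv_line N y" "\<not> (\<exists>c. y = c *\<^sub>R x)" "N \<in> SL2k"
    unfolding inv_line_def SL2k_def using N(1-3) parallel_iff_det2_eq_0 by auto
  then have "N \<in> Diag"
    unfolding Diag_def by blast
  then have "dDiag B \<le> dcoc B N"
    by (rule dDiag_le_dcoc)
  also have "\<dots> \<le> \<eta> / \<delta>\<^sup>2 * (2 + 2 * S / (3 * \<delta>))"
    by (rule dcoc_le) (rule N(4))
  finally show ?thesis .
qed

section \<open>Cocycles near a given one\<close>

definition rho_dir :: "(mat2 \<Rightarrow> real^2) \<Rightarrow> 'k set \<Rightarrow> ('k::finite \<Rightarrow> mat2) \<Rightarrow> real" where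
  "rho_dir v H B = Max {pdist (B j *v v (B i)) (v (B i)) | i j. i \<in> H}"

lemma rho_plus_eq_rho_dir: "rho_plus p A B = rho_dir edir_plus (Sigma_H p A) B"
  and rho_minus_eq_rho_dir: "rho_minus p A B = rho_dir edir_minus (Sigma_H p A) B"
  by (simp_all add: rho_plus_def rho_minus_def rho_dir_def)

lemma rho_dir_image: "{pdist (B j *v v (B i)) (v (B i)) | i j. i \<in> H} =
    (\<lambda>(i, j). pdist (B j *v v (B i)) (v (B i))) ` (H \<times> UNIV)"
  by auto

lemma rho_dir_ge: "i \<in> H \<Longrightarrow> pdist (B j *v v (B i)) (v (B i)) \<le> rho_dir v H B"
  unfolding rho_dir_def rho_dir_image by (intro Max_ge) auto

lemma rho_dir_le:
  "H \<noteq> {} \<Longrightarrow> (\<And>i j. i \<in> H \<Longrightarrow> pdist (B j *v v (B i)) (v (B i)) \<le> r) \<Longrightarrow> rho_dir v H B \<le> r"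
  unfolding rho_dir_def rho_dir_image by (subst Max_le_iff) auto

lemma rho_dir_nonneg: "H \<noteq> {} \<Longrightarrow> 0 \<le> rho_dir v H B"
  using rho_dir_ge pdist_nonneg order_trans by blast

lemma rho_dir_plus_le_coc_inv:
  assumes B: "B \<in> SL2k" "\<forall>i\<in>H. hyperbolic (B i)" "\<And>j. entry_sum (B j) \<le> S" and H: "H \<noteq> {}"
  shows "rho_dir edir_plus H B \<le> S\<^sup>2 * rho_dir edir_minus H (coc_inv B)"
proof (rule rho_dir_le[OF H])
  fix i j assume i: "i \<in> H"
  let ?v = "edir_plus (B i)"
  have det: "\<bar>det (B k)\<bar> = 1" for k
    using B(1) unfolding SL2k_def by blast
  have det0: "det (B k) \<noteq> 0" for k
    using det[of k] by (metis abs_0 zero_neq_one)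
  have hyp: "hyperbolic (B i)"
    using B(2) i by blast
  obtain c where c: "c \<noteq> 0" "edir_minus (matrix_inv (B i)) = c *\<^sub>R ?v"
    using hyperbolic_matrix_inv(2)[OF hyp det0] by blast
  obtain l where v: "?v \<noteq> 0"
    using edir_plus_eigenvector[OF hyp] .
  have w: "matrix_inv (B j) *v ?v \<noteq> 0"
    using matrix_inv_mult_vec(1)[OF det0[of j], of ?v] v by auto
  have "pdist (matrix_inv (B j) *v ?v) ?v
      = pdist (coc_inv B j *v edir_minus (coc_inv B i)) (edir_minus (coc_inv B i))"
    unfolding coc_inv_def c(2) matrix_vector_mult_scaleR using pdist_scaleR[OF c(1) c(1)] by simp
  also have "\<dots> \<le> rho_dir edir_minus H (coc_inv B)"
    by (rule rho_dir_ge[OF i])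
  finally have inv: "pdist (matrix_inv (B j) *v ?v) ?v \<le> rho_dir edir_minus H (coc_inv B)" .
  have "pdist (B j *v ?v) ?v \<le> (entry_sum (B j))\<^sup>2 * pdist (matrix_inv (B j) *v ?v) ?v"
    by (rule pdist_mult_vec_le_matrix_inv[OF det v])
  also have "\<dots> \<le> S\<^sup>2 * rho_dir edir_minus H (coc_inv B)"
    using B(3)[of j] inv
    by (intro mult_mono power_mono) (simp_all add: entry_sum_nonneg pdist_nonneg)
  finally show "pdist (B j *v ?v) ?v \<le> S\<^sup>2 * rho_dir edir_minus H (coc_inv B)" .
qed

definition near_SL2 :: "('k::finite \<Rightarrow> mat2) \<Rightarrow> ('k \<Rightarrow> mat2) filter" where
  "near_SL2 A = (INF \<epsilon>\<in>{0<..}. principal {B \<in> SL2k. dcoc B A < \<epsilon>})"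

lemma eventually_near_SL2:
  "eventually P (near_SL2 A) \<longleftrightarrow> (\<exists>\<epsilon>>0. \<forall>B\<in>SL2k. dcoc B A < \<epsilon> \<longrightarrow> P B)"
proof -
  have "\<exists>\<epsilon>\<in>{0<..}. principal {B \<in> SL2k. dcoc B A < \<epsilon>} \<le>
      inf (principal {B \<in> SL2k. dcoc B A < a}) (principal {B \<in> SL2k. dcoc B A < b})"
    if "a \<in> {0<..}" "b \<in> {0<..}" for a b :: real
    using that by (intro bexI[of _ "min a b"]) auto
  then show ?thesis
    unfolding near_SL2_def by (subst eventually_INF_base) (auto simp: eventually_principal)
qed

lemma eventually_near_SL2_SL2k: "\<forall>\<^sub>F B in near_SL2 A. B \<in> SL2k"
  unfolding eventually_near_SL2 by (auto intro: exI[of _ 1])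

lemma eventually_near_SL2_dcoc_less: "0 < \<epsilon> \<Longrightarrow> \<forall>\<^sub>F B in near_SL2 A. dcoc B A < \<epsilon>"
  unfolding eventually_near_SL2 by auto

lemma eventually_near_SL2_entry_sum_le:
  "\<exists>S. \<forall>\<^sub>F B in near_SL2 A. \<forall>j. entry_sum (B j) \<le> S"
proof (intro exI eventually_mono[OF eventually_near_SL2_dcoc_less[of 1]] allI)
  fix B j assume "dcoc B A < 1"
  then have "entry_sum (B j) \<le> entry_sum (A j) + 4"
    using entry_sum_le_add_mnorm[of "B j" "A j"] mnorm_le_dcoc[of B j A] by linarith
  also have "\<dots> \<le> (\<Sum>i\<in>UNIV. entry_sum (A i)) + 4"
    by (intro add_right_mono member_le_sum) (auto simp: entry_sum_nonneg)
  finally show "entry_sum (B j) \<le> (\<Sum>i\<in>UNIV. entry_sum (A i)) + 4" .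
qed simp

lemma eventually_near_SL2_hyperbolic:
  assumes det: "\<bar>det (A i)\<bar> = 1" and tr: "(trace (A i))\<^sup>2 > (1 + det (A i))\<^sup>2"
  shows "\<forall>\<^sub>F B in near_SL2 A. hyperbolic (B i)"
proof -
  define m where "m = (trace (A i))\<^sup>2 - (1 + det (A i))\<^sup>2"
  define \<epsilon> where "\<epsilon> = min 1 (min (1 / (entry_sum (A i) + 2)) (m / (4 * (\<bar>trace (A i)\<bar> + 1))))"
  have "0 < \<epsilon>"
    using tr entry_sum_nonneg[of "A i"] unfolding \<epsilon>_def m_def by simp
  have "hyperbolic (B i)" if B: "B \<in> SL2k" "dcoc B A < \<epsilon>" for B
  proof -
    define d where "d = mnorm (B i - A i)"
    have d: "0 \<le> d" "d < \<epsilon>"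
      using mnorm_nonneg mnorm_le_dcoc[of B i A] B(2) unfolding d_def by (auto intro: le_less_trans)
    have detB: "\<bar>det (B i)\<bar> = 1"
      using B(1) unfolding SL2k_def by blast
    have "\<bar>det (B i) - det (A i)\<bar> \<le> d * (entry_sum (A i) + 2)"
      using abs_det_diff_le[of "B i" "A i"] d unfolding d_def \<epsilon>_def by simp
    also have "\<dots> < 1"
      using d entry_sum_nonneg[of "A i"] unfolding \<epsilon>_def by (simp add: field_simps)
    finally have "det (B i) = det (A i)"
      using det detB by (auto simp: abs_if split: if_splits)
    have diff: "\<bar>trace (B i) - trace (A i)\<bar> \<le> 2 * d"
      using abs_trace_diff_le unfolding d_def .
    moreover have "\<bar>trace (B i) + trace (A i)\<bar> \<le> 2 * \<bar>trace (A i)\<bar> + 2 * d"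
      using diff abs_triangle_ineq[of "trace (B i) - trace (A i)" "2 * trace (A i)"] by simp
    ultimately have "\<bar>(trace (B i))\<^sup>2 - (trace (A i))\<^sup>2\<bar> \<le> (2 * \<bar>trace (A i)\<bar> + 2 * d) * (2 * d)"
      unfolding power2_eq_square square_diff_square_factored abs_mult
      by (intro mult_mono) auto
    also have "\<dots> \<le> 4 * d * (\<bar>trace (A i)\<bar> + 1)"
      using d mult_left_mono[of d 1 d] unfolding \<epsilon>_def by (simp add: algebra_simps)
    also have "\<dots> < m"
      using d tr unfolding \<epsilon>_def m_def by (simp add: field_simps)
    finally show ?thesis
      using hyperbolic_if_trace_gt[OF detB] \<open>det (B i) = det (A i)\<close> unfolding m_def by simp
  qed
  then show ?thesis
    unfolding eventually_near_SL2 using \<open>0 < \<epsilon>\<close> by blast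
qed

section \<open>Lyapunov exponent of a diagonal cocycle\<close>

definition word_expectation :: "('k::finite \<Rightarrow> real) \<Rightarrow> nat \<Rightarrow> ('k list \<Rightarrow> real) \<Rightarrow> real" where
  "word_expectation p n g = (\<Sum>w\<in>{w. length w = n}. prod_list (map p w) * g w)"

definition mean :: "('k::finite \<Rightarrow> real) \<Rightarrow> ('k \<Rightarrow> real) \<Rightarrow> real" where
  "mean p l = (\<Sum>j\<in>UNIV. p j * l j)"

lemma lyap_eq_lim_word_expectation:
  "lyap p A = lim (\<lambda>n. word_expectation p n (\<lambda>w. ln (mnorm (word_prod A w))) / real n)"
  unfolding lyap_def word_expectation_def ..

lemma line_exp_eq_mean: "line_exp p A e = mean p (\<lambda>j. ln \<bar>line_eig A e j\<bar>)"
  unfolding line_exp_def mean_def ..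

lemma word_expectation_0: "word_expectation p 0 g = g []"
proof -
  have "{w::'k list. length w = 0} = {[]}" by auto
  then show ?thesis by (simp add: word_expectation_def)
qed

lemma word_expectation_Suc:
  "word_expectation p (Suc n) g = (\<Sum>x\<in>UNIV. p x * word_expectation p n (\<lambda>w. g (x # w)))"
proof -
  have words: "{w::'k list. length w = Suc n} = (\<lambda>(x, w). x # w) ` (UNIV \<times> {w. length w = n})"
    by (auto simp: length_Suc_conv image_iff)
  have inj: "inj_on (\<lambda>(x, w). x # w) (UNIV \<times> {w::'k list. length w = n})"
    by (auto simp: inj_on_def)
  have "word_expectation p (Suc n) g =
      (\<Sum>(x, w)\<in>UNIV \<times> {w. length w = n}. prod_list (map p (x # w)) * g (x # w))"
    unfolding word_expectation_def words by (subst sum.reindex[OF inj]) (simp add: case_prod_unfold)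
  also have "\<dots> = (\<Sum>x\<in>UNIV. \<Sum>w\<in>{w. length w = n}. prod_list (map p (x # w)) * g (x # w))"
    by (rule sum.cartesian_product[symmetric])
  finally show ?thesis
    unfolding word_expectation_def by (simp add: sum_distrib_left algebra_simps)
qed

lemma word_expectation_add: "word_expectation p n (\<lambda>w. f w + g w) = word_expectation p n f + word_expectation p n g"
  and word_expectation_diff: "word_expectation p n (\<lambda>w. f w - g w) = word_expectation p n f - word_expectation p n g"
  and word_expectation_mult_left: "word_expectation p n (\<lambda>w. c * f w) = c * word_expectation p n f"
  unfolding word_expectation_def
  by (simp_all add: algebra_simps sum.distrib sum_subtractf sum_distrib_left)

context
  fixes p :: "'k::finite \<Rightarrow> real"
  assumes p_pos: "\<And>j. 0 < p j" and p_sum: "(\<Sum>j\<in>UNIV. p j) = 1"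
begin

lemma word_expectation_const: "word_expectation p n (\<lambda>w. c) = c"
proof (induction n)
  case (Suc n)
  then show ?case
    by (simp add: word_expectation_Suc p_sum flip: sum_distrib_right)
qed (simp add: word_expectation_0)

lemma word_expectation_mono:
  "(\<And>w. length w = n \<Longrightarrow> f w \<le> g w) \<Longrightarrow> word_expectation p n f \<le> word_expectation p n g"
proof -
  have "0 \<le> prod_list (map p w)" for w
    using p_pos by (induction w) (auto simp: less_imp_le)
  then show "(\<And>w. length w = n \<Longrightarrow> f w \<le> g w) \<Longrightarrow> ?thesis"
    unfolding word_expectation_def by (intro sum_mono mult_left_mono) auto
qed

lemma abs_word_expectation_le: "\<bar>word_expectation p n g\<bar> \<le> word_expectation p n (\<lambda>w. \<bar>g w\<bar>)"
proof -
  have "word_expectation p n (\<lambda>w. - \<bar>g w\<bar>) \<le> word_expectation p n g"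
    and "word_expectation p n g \<le> word_expectation p n (\<lambda>w. \<bar>g w\<bar>)"
    by (intro word_expectation_mono; simp)+
  then show ?thesis
    using word_expectation_mult_left[of p n "-1" "\<lambda>w. \<bar>g w\<bar>"] by simp
qed

lemma word_expectation_abs_squared_le:
  "(word_expectation p n (\<lambda>w. \<bar>g w\<bar>))\<^sup>2 \<le> word_expectation p n (\<lambda>w. (g w)\<^sup>2)"
proof -
  define m where "m = word_expectation p n (\<lambda>w. \<bar>g w\<bar>)"
  have "0 \<le> word_expectation p n (\<lambda>w. (\<bar>g w\<bar> - m)\<^sup>2)"
    using word_expectation_mono[of n "\<lambda>w. 0" "\<lambda>w. (\<bar>g w\<bar> - m)\<^sup>2"] by (simp add: word_expectation_const)
  also have "word_expectation p n (\<lambda>w. (\<bar>g w\<bar> - m)\<^sup>2)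
      = word_expectation p n (\<lambda>w. (g w)\<^sup>2 - (2 * m) * \<bar>g w\<bar> + m\<^sup>2)"
    by (simp add: power2_eq_square algebra_simps)
  also have "\<dots> = word_expectation p n (\<lambda>w. (g w)\<^sup>2) - m\<^sup>2"
    unfolding word_expectation_add word_expectation_diff word_expectation_mult_left
      word_expectation_const m_def[symmetric] by (simp add: power2_eq_square)
  finally show ?thesis
    unfolding m_def by simp
qed

lemma word_expectation_sum_list: "word_expectation p n (\<lambda>w. sum_list (map l w)) = real n * mean p l"
proof (induction n)
  case (Suc n)
  have "word_expectation p (Suc n) (\<lambda>w. sum_list (map l w)) = (\<Sum>x\<in>UNIV. p x * (l x + real n * mean p l))"
    unfolding word_expectation_Suc by (simp add: word_expectation_add word_expectation_const Suc)
  also have "\<dots> = real (Suc n) * mean p l"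
    by (simp add: mean_def distrib_left sum.distrib p_sum algebra_simps flip: sum_distrib_left sum_distrib_right)
  finally show ?case .
qed (simp add: word_expectation_0)

lemma word_expectation_sum_list_variance:
  "word_expectation p n (\<lambda>w. (sum_list (map l w) - real n * mean p l)\<^sup>2)
    = real n * mean p (\<lambda>j. (l j - mean p l)\<^sup>2)"
proof (induction n)
  case (Suc n)
  let ?m = "mean p l" and ?X = "\<lambda>w. sum_list (map l w) - real n * mean p l"
  have sq: "(sum_list (map l (x # w)) - real (Suc n) * ?m)\<^sup>2 = (l x - ?m)\<^sup>2 + 2 * (l x - ?m) * ?X w + (?X w)\<^sup>2"
    for x w by (simp add: power2_eq_square algebra_simps)
  have centered: "word_expectation p n ?X = 0"
    by (simp add: word_expectation_diff word_expectation_sum_list word_expectation_const)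
  have "word_expectation p (Suc n) (\<lambda>w. (sum_list (map l w) - real (Suc n) * ?m)\<^sup>2)
      = (\<Sum>x\<in>UNIV. p x * ((l x - ?m)\<^sup>2 + real n * mean p (\<lambda>j. (l j - ?m)\<^sup>2)))"
    unfolding word_expectation_Suc sq word_expectation_add word_expectation_mult_left
      word_expectation_const centered Suc by simp
  also have "\<dots> = real (Suc n) * mean p (\<lambda>j. (l j - ?m)\<^sup>2)"
    by (simp add: mean_def distrib_left sum.distrib p_sum algebra_simps flip: sum_distrib_left sum_distrib_right)
  finally show ?case .
qed (simp add: word_expectation_0)

lemma exists_ge_mean: "\<exists>j. mean p l \<le> l j"
proof (rule ccontr)
  assume "\<not> (\<exists>j. mean p l \<le> l j)"
  then have "l j < mean p l" for j
    by (simp add: not_le)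
  then have "mean p l < (\<Sum>j\<in>UNIV. p j * mean p l)"
    unfolding mean_def[of p l] using p_pos by (intro sum_strict_mono mult_strict_left_mono) auto
  then show False
    by (simp add: p_sum flip: sum_distrib_right)
qed

lemma word_expectation_abs_sum_list_le:
  "word_expectation p n (\<lambda>w. \<bar>sum_list (map l w)\<bar>)
    \<le> real n * \<bar>mean p l\<bar> + sqrt (real n * mean p (\<lambda>j. (l j - mean p l)\<^sup>2))"
proof -
  let ?X = "\<lambda>w. sum_list (map l w) - real n * mean p l"
  have "(word_expectation p n (\<lambda>w. \<bar>?X w\<bar>))\<^sup>2 \<le> real n * mean p (\<lambda>j. (l j - mean p l)\<^sup>2)"
    using word_expectation_abs_squared_le[of n ?X] word_expectation_sum_list_variance[of n l] by simp
  then have "word_expectation p n (\<lambda>w. \<bar>?X w\<bar>) \<le> sqrt (real n * mean p (\<lambda>j. (l j - mean p l)\<^sup>2))"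
    by (rule real_le_rsqrt)
  moreover have "word_expectation p n (\<lambda>w. \<bar>sum_list (map l w)\<bar>)
      \<le> word_expectation p n (\<lambda>w. \<bar>?X w\<bar> + real n * \<bar>mean p l\<bar>)"
    using abs_triangle_ineq[of "?X _" "real n * mean p l"] by (intro word_expectation_mono) (simp add: abs_mult)
  ultimately show ?thesis
    by (simp add: word_expectation_add word_expectation_const)
qed

text \<open>A law of large numbers in \<open>L\<^sup>1\<close>: by the variance bound, \<open>\<Sum>\<^sub>k l(x\<^sub>k)\<close> deviates from
  \<open>n \<cdot> mean p l\<close> by \<open>O(\<surd>n)\<close> on average.\<close>
lemma tendsto_word_expectation_div:
  assumes lower: "\<And>w. \<bar>sum_list (map l w)\<bar> \<le> g w" and upper: "\<And>w. g w \<le> K + \<bar>sum_list (map l w)\<bar>"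
  shows "(\<lambda>n. word_expectation p n g / real n) \<longlonglongrightarrow> \<bar>mean p l\<bar>"
proof (rule tendsto_sandwich[where f = "\<lambda>n. \<bar>mean p l\<bar>"])
  define v where "v = mean p (\<lambda>j. (l j - mean p l)\<^sup>2)"
  show "\<forall>\<^sub>F n in sequentially. \<bar>mean p l\<bar> \<le> word_expectation p n g / real n"
  proof (intro eventually_mono[OF eventually_ge_at_top[of 1]])
    fix n :: nat assume n: "1 \<le> n"
    have "real n * \<bar>mean p l\<bar> = \<bar>word_expectation p n (\<lambda>w. sum_list (map l w))\<bar>"
      by (simp add: word_expectation_sum_list abs_mult)
    also have "\<dots> \<le> word_expectation p n (\<lambda>w. \<bar>sum_list (map l w)\<bar>)"
      by (rule abs_word_expectation_le)
    also have "\<dots> \<le> word_expectation p n g"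
      by (intro word_expectation_mono lower)
    finally show "\<bar>mean p l\<bar> \<le> word_expectation p n g / real n"
      using n by (simp add: field_simps)
  qed
  show "\<forall>\<^sub>F n in sequentially. word_expectation p n g / real n
      \<le> \<bar>mean p l\<bar> + K / real n + sqrt v / sqrt (real n)"
  proof (intro eventually_mono[OF eventually_ge_at_top[of 1]])
    fix n :: nat assume n: "1 \<le> n"
    have "word_expectation p n g \<le> word_expectation p n (\<lambda>w. K + \<bar>sum_list (map l w)\<bar>)"
      by (intro word_expectation_mono upper)
    also have "\<dots> \<le> K + real n * \<bar>mean p l\<bar> + sqrt (real n * v)"
      using word_expectation_abs_sum_list_le[of n l] unfolding v_def
      by (simp add: word_expectation_add word_expectation_const)
    finally have "word_expectation p n g / real n \<le> (K + real n * \<bar>mean p l\<bar> + sqrt (real n * v)) / real n"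
      by (simp add: divide_right_mono)
    also have "\<dots> = \<bar>mean p l\<bar> + K / real n + sqrt (real n * v) / real n"
      using n by (simp add: add_divide_distrib)
    also have "sqrt (real n * v) / real n = sqrt v * (sqrt (real n) / real n)"
      by (simp add: real_sqrt_mult)
    also have "\<dots> = sqrt v / sqrt (real n)"
      by (subst sqrt_divide_self_eq) (simp_all add: divide_inverse)
    finally show "word_expectation p n g / real n \<le> \<bar>mean p l\<bar> + K / real n + sqrt v / sqrt (real n)" .
  qed
  have "(\<lambda>n. \<bar>mean p l\<bar> + K / real n + sqrt v / sqrt (real n)) \<longlonglongrightarrow> \<bar>mean p l\<bar> + 0 + 0"
    by (intro tendsto_add tendsto_const tendsto_divide_0[OF tendsto_const]
        filterlim_at_top_imp_at_infinity filterlim_real_sequentially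
        filterlim_compose[OF sqrt_at_top filterlim_real_sequentially])
  then show "(\<lambda>n. \<bar>mean p l\<bar> + K / real n + sqrt v / sqrt (real n)) \<longlonglongrightarrow> \<bar>mean p l\<bar>"
    by simp
qed simp

end

lemma word_prod_eigenvector:
  assumes "\<And>j. A j *v u = a j *\<^sub>R u"
  shows "word_prod A w *v u = prod_list (map a w) *\<^sub>R u"
proof (induction w rule: rev_induct)
  case (snoc x w)
  have "word_prod A (w @ [x]) *v u = A x *v (word_prod A w *v u)"
    by (simp add: word_prod_def matrix_vector_mul_assoc)
  then show ?case
    by (simp add: snoc assms matrix_vector_mult_scaleR mult.commute)
qed (simp add: word_prod_def)

lemma abs_prod_list_eq_exp:
  fixes a :: "'k \<Rightarrow> real"
  assumes "\<And>j. a j \<noteq> 0"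
  shows "\<bar>prod_list (map a w)\<bar> = exp (sum_list (map (\<lambda>j. ln \<bar>a j\<bar>) w))"
  using assms by (induction w) (simp_all add: abs_mult exp_add)

lemma mnorm_word_prod_bounds:
  fixes A :: "'k \<Rightarrow> mat2"
  assumes u: "\<And>j. A j *v u = a j *\<^sub>R u" and v: "\<And>j. A j *v v = b j *\<^sub>R v"
    and D: "det2 u v \<noteq> 0" and ab: "\<And>j. \<bar>a j\<bar> * \<bar>b j\<bar> = 1"
  shows "exp \<bar>sum_list (map (\<lambda>j. ln \<bar>a j\<bar>) w)\<bar> \<le> mnorm (word_prod A w)"
    and "mnorm (word_prod A w)
      \<le> 2 * norm u * norm v / \<bar>det2 u v\<bar> * exp \<bar>sum_list (map (\<lambda>j. ln \<bar>a j\<bar>) w)\<bar>"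
proof -
  define S where "S = sum_list (map (\<lambda>j. ln \<bar>a j\<bar>) w)"
  let ?M = "word_prod A w"
  have a0: "a j \<noteq> 0" and b0: "b j \<noteq> 0" for j
    using ab[of j] by auto
  have lnb: "ln \<bar>b j\<bar> = - ln \<bar>a j\<bar>" for j
    using ln_mult[of "\<bar>a j\<bar>" "\<bar>b j\<bar>"] ab[of j] a0[of j] b0[of j] by simp
  have P: "\<bar>prod_list (map a w)\<bar> = exp S"
    unfolding S_def by (rule abs_prod_list_eq_exp[OF a0])
  have Q: "\<bar>prod_list (map b w)\<bar> = exp (- S)"
    unfolding S_def abs_prod_list_eq_exp[OF b0] lnb by (induction w) simp_all
  have "u \<noteq> 0" "v \<noteq> 0"
    using D by auto
  then have "\<bar>prod_list (map a w)\<bar> \<le> mnorm ?M" "\<bar>prod_list (map b w)\<bar> \<le> mnorm ?M"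
    using abs_eigenvalue_le_mnorm word_prod_eigenvector u v by blast+
  then show "exp \<bar>sum_list (map (\<lambda>j. ln \<bar>a j\<bar>) w)\<bar> \<le> mnorm ?M"
    unfolding S_def[symmetric] P Q by (cases "0 \<le> S") auto
  have "mnorm ?M \<le> (norm (?M *v u) * norm v + norm u * norm (?M *v v)) / \<bar>det2 u v\<bar>"
    by (rule mnorm_le_basis[OF D])
  also have "\<dots> = (exp S + exp (- S)) * (norm u * norm v / \<bar>det2 u v\<bar>)"
    unfolding word_prod_eigenvector[OF u] word_prod_eigenvector[OF v] norm_scaleR P Q
    by (simp add: algebra_simps add_divide_distrib)
  also have "\<dots> \<le> (2 * exp \<bar>S\<bar>) * (norm u * norm v / \<bar>det2 u v\<bar>)"
    by (intro mult_right_mono) (cases "0 \<le> S"; simp)+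
  also have "\<dots> = 2 * norm u * norm v / \<bar>det2 u v\<bar> * exp \<bar>S\<bar>"
    by simp
  finally show "mnorm ?M \<le> 2 * norm u * norm v / \<bar>det2 u v\<bar> * exp \<bar>sum_list (map (\<lambda>j. ln \<bar>a j\<bar>) w)\<bar>"
    unfolding S_def .
qed

lemma ln_mnorm_word_prod_bounds:
  fixes A :: "'k \<Rightarrow> mat2"
  assumes "\<And>j. A j *v u = a j *\<^sub>R u" "\<And>j. A j *v v = b j *\<^sub>R v"
    and D: "det2 u v \<noteq> 0" and "\<And>j. \<bar>a j\<bar> * \<bar>b j\<bar> = 1"
  shows "\<bar>sum_list (map (\<lambda>j. ln \<bar>a j\<bar>) w)\<bar> \<le> ln (mnorm (word_prod A w))"
    and "ln (mnorm (word_prod A w))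
      \<le> ln (2 * norm u * norm v / \<bar>det2 u v\<bar>) + \<bar>sum_list (map (\<lambda>j. ln \<bar>a j\<bar>) w)\<bar>"
proof -
  define S K where "S = \<bar>sum_list (map (\<lambda>j. ln \<bar>a j\<bar>) w)\<bar>"
    and "K = 2 * norm u * norm v / \<bar>det2 u v\<bar>"
  have low: "exp S \<le> mnorm (word_prod A w)" and up: "mnorm (word_prod A w) \<le> K * exp S"
    unfolding S_def K_def using mnorm_word_prod_bounds[where A = A and a = a and b = b and u = u and v = v and w = w, OF assms]
    by blast+
  have pos: "0 < mnorm (word_prod A w)"
    using less_le_trans[OF exp_gt_zero low] .
  then show "\<bar>sum_list (map (\<lambda>j. ln \<bar>a j\<bar>) w)\<bar> \<le> ln (mnorm (word_prod A w))"
    using ln_le_cancel_iff[OF exp_gt_zero pos] low unfolding S_def by simp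
  have "u \<noteq> 0" "v \<noteq> 0"
    using D by auto
  then have "0 < K"
    using D unfolding K_def by simp
  then have "ln (mnorm (word_prod A w)) \<le> ln (K * exp S)"
    using ln_le_cancel_iff[OF pos, of "K * exp S"] up by simp
  also have "\<dots> = ln K + S"
    using \<open>0 < K\<close> by (simp add: ln_mult)
  finally show "ln (mnorm (word_prod A w))
      \<le> ln (2 * norm u * norm v / \<bar>det2 u v\<bar>) + \<bar>sum_list (map (\<lambda>j. ln \<bar>a j\<bar>) w)\<bar>"
    unfolding S_def K_def .
qed

lemma lyap_eigenbasis:
  fixes p :: "'k::finite \<Rightarrow> real" and A :: "'k \<Rightarrow> mat2"
  assumes "\<And>j. 0 < p j" "(\<Sum>j\<in>UNIV. p j) = 1"
    and "\<And>j. A j *v u = a j *\<^sub>R u" "\<And>j. A j *v v = b j *\<^sub>R v" "det2 u v \<noteq> 0" "\<And>j. \<bar>a j\<bar> * \<bar>b j\<bar> = 1"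
  shows "lyap p A = \<bar>mean p (\<lambda>j. ln \<bar>a j\<bar>)\<bar>"
  unfolding lyap_eq_lim_word_expectation
  using tendsto_word_expectation_div[OF assms(1,2) ln_mnorm_word_prod_bounds[OF assms(3-6)]]
  by (rule limI)

lemma inv_line_eig: "inv_line A u \<Longrightarrow> A j *v u = line_eig A u j *\<^sub>R u"
  unfolding inv_line_def line_eig_def
  by (metis inner_commute inner_scaleR_right inner_eq_zero_iff nonzero_mult_div_cancel_right)

lemma inv_line_scaleR:
  assumes "c \<noteq> 0" "inv_line A u"
  shows "inv_line A (c *\<^sub>R u)"
  unfolding inv_line_def
proof (intro conjI allI)
  show "c *\<^sub>R u \<noteq> 0"
    using assms unfolding inv_line_def by simp
  show "\<exists>a. A j *v (c *\<^sub>R u) = a *\<^sub>R c *\<^sub>R u" for j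
    by (intro exI[of _ "line_eig A u j"])
      (simp add: matrix_vector_mult_scaleR inv_line_eig[OF assms(2)] scaleR_left_commute)
qed

lemma line_eig_scaleR: "c \<noteq> 0 \<Longrightarrow> line_eig A (c *\<^sub>R u) j = line_eig A u j"
  unfolding line_eig_def by (simp add: matrix_vector_mult_scaleR field_simps power2_eq_square)

lemma line_eig_mult_eq_det:
  assumes "inv_line A u" "inv_line A v" "det2 u v \<noteq> 0"
  shows "line_eig A u j * line_eig A v j = det (A j)"
  using det2_mult_vec[of "A j" u v] assms(3)
  by (simp add: inv_line_eig[OF assms(1)] inv_line_eig[OF assms(2)] ac_simps)

lemma Diag_invariant_lines:
  assumes "A \<in> Diag"
  obtains u v where "inv_line A u" "inv_line A v" "det2 u v \<noteq> 0"
    "\<And>j. \<bar>line_eig A u j\<bar> * \<bar>line_eig A v j\<bar> = 1"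
proof -
  obtain u v where "inv_line A u" "inv_line A v" "\<not> (\<exists>c. v = c *\<^sub>R u)" "\<forall>j. \<bar>det (A j)\<bar> = 1"
    using assms unfolding Diag_def SL2k_def by blast
  moreover have "u \<noteq> 0"
    using calculation(1) unfolding inv_line_def by blast
  ultimately show ?thesis
    using that line_eig_mult_eq_det parallel_iff_det2_eq_0 by (metis abs_mult)
qed

lemma line_exp_scaleR: "c \<noteq> 0 \<Longrightarrow> line_exp p A (c *\<^sub>R u) = line_exp p A u"
  unfolding line_exp_def by (simp add: line_eig_scaleR)

lemma Diag_exponent_lines:
  fixes p :: "'k::finite \<Rightarrow> real"
  assumes p: "\<And>j. 0 < p j" "(\<Sum>j\<in>UNIV. p j) = 1" and A: "A \<in> Diag"
  obtains x y where "inv_line A x" "inv_line A y" "det2 x y \<noteq> 0"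
    "line_exp p A x = lyap p A" "line_exp p A y = - lyap p A"
proof -
  obtain u v where u: "inv_line A u" and v: "inv_line A v" and D: "det2 u v \<noteq> 0"
    and uv: "\<And>j. \<bar>line_eig A u j\<bar> * \<bar>line_eig A v j\<bar> = 1"
    using Diag_invariant_lines[OF A] by blast
  have lyap_u: "lyap p A = \<bar>line_exp p A u\<bar>"
    unfolding line_exp_eq_mean using lyap_eigenbasis[OF p inv_line_eig[OF u] inv_line_eig[OF v] D uv] .
  have "ln \<bar>line_eig A v j\<bar> = - ln \<bar>line_eig A u j\<bar>" for j
    using ln_mult[of "\<bar>line_eig A u j\<bar>" "\<bar>line_eig A v j\<bar>"] uv[of j]
    by (cases "line_eig A u j = 0"; cases "line_eig A v j = 0") auto
  then have v_u: "line_exp p A v = - line_exp p A u"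
    unfolding line_exp_def by (simp add: sum_negf)
  show ?thesis
  proof (cases "0 \<le> line_exp p A u")
    case True
    then have "line_exp p A u = lyap p A" "line_exp p A v = - lyap p A"
      using lyap_u v_u by simp_all
    then show ?thesis
      using that[OF u v D] by blast
  next
    case False
    then have "line_exp p A v = lyap p A" "line_exp p A u = - lyap p A"
      using lyap_u v_u by simp_all
    moreover have "det2 v u \<noteq> 0"
      using D by (simp add: det2_swap[of v u])
    ultimately show ?thesis
      using that[OF v u] by blast
  qed
qed

lemma e_plus_spec:
  fixes p :: "'k::finite \<Rightarrow> real"
  assumes p: "\<And>j. 0 < p j" "(\<Sum>j\<in>UNIV. p j) = 1" and A: "A \<in> Diag"
  obtains f where "norm (e_plus p A) = 1" "norm f = 1" "det2 (e_plus p A) f \<noteq> 0"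
    "inv_line A (e_plus p A)" "inv_line A f" "line_exp p A (e_plus p A) = lyap p A"
proof -
  obtain x y where x: "inv_line A x" and y: "inv_line A y" and xy: "det2 x y \<noteq> 0"
    and exps: "line_exp p A x = lyap p A" "line_exp p A y = - lyap p A"
    using Diag_exponent_lines[OF p A] .
  have "x \<noteq> 0" "y \<noteq> 0"
    using xy by auto
  define x' y' where "x' = (1 / norm x) *\<^sub>R x" and "y' = (1 / norm y) *\<^sub>R y"
  have "norm x' = 1" "norm y' = 1" "inv_line A x'" "inv_line A y'"
    using \<open>x \<noteq> 0\<close> \<open>y \<noteq> 0\<close> x y unfolding x'_def y'_def by (simp_all add: inv_line_scaleR)
  moreover have "line_exp p A x' = lyap p A" "line_exp p A y' = - lyap p A"
    using \<open>x \<noteq> 0\<close> \<open>y \<noteq> 0\<close> exps unfolding x'_def y'_def by (simp_all add: line_exp_scaleR)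
  moreover have "\<not> (\<exists>c. y' = c *\<^sub>R x')"
    using \<open>x \<noteq> 0\<close> \<open>y \<noteq> 0\<close> xy parallel_iff_det2_eq_0[of x' y'] unfolding x'_def y'_def by simp
  ultimately have "\<exists>e. norm e = 1 \<and> inv_line A e \<and> line_exp p A e = lyap p A \<and>
      (\<exists>f. norm f = 1 \<and> inv_line A f \<and> \<not> (\<exists>c. f = c *\<^sub>R e) \<and> line_exp p A f = - lyap p A)"
    by blast
  then have e: "norm (e_plus p A) = 1 \<and> inv_line A (e_plus p A) \<and> line_exp p A (e_plus p A) = lyap p A \<and>
      (\<exists>f. norm f = 1 \<and> inv_line A f \<and> \<not> (\<exists>c. f = c *\<^sub>R e_plus p A) \<and> line_exp p A f = - lyap p A)"
    unfolding e_plus_def by (rule someI_ex)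
  then obtain f where "norm f = 1" "inv_line A f" "\<not> (\<exists>c. f = c *\<^sub>R e_plus p A)"
    by blast
  moreover have "e_plus p A \<noteq> 0"
    using e by auto
  ultimately have "det2 (e_plus p A) f \<noteq> 0"
    using parallel_iff_det2_eq_0 by blast
  then show ?thesis
    using that e \<open>norm f = 1\<close> \<open>inv_line A f\<close> by blast
qed

lemma Sigma_H_nonempty:
  fixes p :: "'k::finite \<Rightarrow> real"
  assumes p: "\<And>j. 0 < p j" "(\<Sum>j\<in>UNIV. p j) = 1"
    and e: "line_exp p A (e_plus p A) = lyap p A" "\<And>j. line_eig A (e_plus p A) j \<noteq> 0"
  shows "Sigma_H p A \<noteq> {}"
proof -
  obtain i where "lyap p A \<le> ln \<bar>line_eig A (e_plus p A) i\<bar>"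
    using exists_ge_mean[OF p] e(1) unfolding line_exp_eq_mean by metis
  then have "exp (lyap p A) \<le> \<bar>line_eig A (e_plus p A) i\<bar>"
    using e(2)[of i] by (metis zero_less_abs_iff exp_le_cancel_iff exp_ln)
  then show ?thesis
    unfolding Sigma_H_def by blast
qed

section \<open>Estimates near a diagonal cocycle\<close>

text \<open>The vectors \<open>e\<close>, \<open>f\<close> span the invariant lines of \<open>A\<close>, with eigenvalues \<open>a\<close>, \<open>c\<close>;
  \<open>H\<close> and \<open>h\<close> play the roles of \<open>\<Sigma>\<^sub>H(A)\<close> and \<open>e\<^bsup>L(A)\<^esup>\<close>.\<close>
locale diagonal_cocycle =
  fixes A :: "'k::finite \<Rightarrow> mat2" and e f :: "real^2" and a c :: "'k \<Rightarrow> real"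
    and H :: "'k set" and h :: real
  assumes unit_e: "norm e = 1" and unit_f: "norm f = 1" and transversal: "det2 e f \<noteq> 0"
    and eig_e: "\<And>j. A j *v e = a j *\<^sub>R e" and eig_f: "\<And>j. A j *v f = c j *\<^sub>R f"
    and det_A: "\<And>j. \<bar>det (A j)\<bar> = 1"
    and h_gt_1: "1 < h" and H_nonempty: "H \<noteq> {}" and expanding: "\<And>i. i \<in> H \<Longrightarrow> h \<le> \<bar>a i\<bar>"
begin

lemma eigenvalues_mult: "a j * c j = det (A j)"
  using det2_mult_vec[of "A j" e f] transversal by (simp add: eig_e eig_f ac_simps)

lemma abs_eigenvalues_mult: "\<bar>a j\<bar> * \<bar>c j\<bar> = 1"
  using eigenvalues_mult det_A by (metis abs_mult)

lemma contracting: "i \<in> H \<Longrightarrow> \<bar>c i\<bar> \<le> 1 / h"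
  using abs_eigenvalues_mult[of i] expanding[of i] h_gt_1
  by (simp add: field_simps) (metis abs_ge_zero mult_right_mono mult.commute)

lemma eventually_hyperbolic: "\<forall>\<^sub>F B in near_SL2 A. \<forall>i\<in>H. hyperbolic (B i)"
proof (intro eventually_ball_finite ballI)
  fix i assume i: "i \<in> H"
  have "trace (A i) * det2 e f = (a i + c i) * det2 e f"
    using det2_mult_vec_trace[of "A i" e f] by (simp add: eig_e eig_f algebra_simps)
  then have "trace (A i) = a i + c i"
    using transversal by simp
  then have "(trace (A i))\<^sup>2 - (1 + det (A i))\<^sup>2 = ((a i)\<^sup>2 - 1) * (1 - (c i)\<^sup>2)"
    using eigenvalues_mult[of i, symmetric] by (simp add: power2_eq_square algebra_simps)
  moreover have "1 < \<bar>a i\<bar>" "\<bar>c i\<bar> < 1"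
    using expanding[OF i] order_le_less_trans[OF contracting[OF i]] h_gt_1 by auto
  then have "1 < (a i)\<^sup>2" "(c i)\<^sup>2 < 1"
    using one_less_power[of "\<bar>a i\<bar>" 2] abs_square_less_1 by auto
  ultimately have "(1 + det (A i))\<^sup>2 < (trace (A i))\<^sup>2"
    using mult_pos_pos[of "(a i)\<^sup>2 - 1" "1 - (c i)\<^sup>2"] by linarith
  then show "\<forall>\<^sub>F B in near_SL2 A. hyperbolic (B i)"
    by (rule eventually_near_SL2_hyperbolic[of A i, OF det_A])
qed simp

lemma expanding_eigenvector_near_e:
  assumes i: "i \<in> H" and v: "M *v v = l *\<^sub>R v" "1 < \<bar>l\<bar>"
  shows "\<bar>det2 e v\<bar> \<le> h / (h - 1) * mnorm (M - A i) * norm v"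
proof -
  have "a i \<noteq> 0"
    using abs_eigenvalues_mult[of i] by auto
  then have gap: "\<bar>l - c i\<bar> * \<bar>det2 e v\<bar> \<le> mnorm (M - A i) * norm v"
    using eigenvalue_gap_mult_det2_le[OF eig_e _ eigenvalues_mult v(1)] unit_e by simp
  have "(h - 1) / h \<le> \<bar>l - c i\<bar>"
    using contracting[OF i] v(2) h_gt_1 by (simp add: diff_divide_distrib)
  then have "(h - 1) / h * \<bar>det2 e v\<bar> \<le> mnorm (M - A i) * norm v"
    using gap by (meson abs_ge_zero mult_right_mono order_trans)
  then show ?thesis
    using h_gt_1 by (simp add: field_simps)
qed

lemma contracting_eigenvector_near_f:
  assumes i: "i \<in> H" and v: "M *v v = l *\<^sub>R v" "\<bar>l\<bar> < 1"
  shows "\<bar>det2 f v\<bar> \<le> h / (h - 1) * mnorm (M - A i) * norm v"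
proof -
  have "c i \<noteq> 0"
    using abs_eigenvalues_mult[of i] by auto
  then have gap: "\<bar>l - a i\<bar> * \<bar>det2 f v\<bar> \<le> mnorm (M - A i) * norm v"
    using eigenvalue_gap_mult_det2_le[where c = "a i", OF eig_f _ _ v(1)] eigenvalues_mult unit_f
    by (simp add: mult.commute)
  have "(h - 1) / h \<le> h - 1"
    using h_gt_1 by (simp add: divide_le_eq)
  also have "h - 1 \<le> \<bar>l - a i\<bar>"
    using expanding[OF i] v(2) by linarith
  finally have "(h - 1) / h * \<bar>det2 f v\<bar> \<le> mnorm (M - A i) * norm v"
    using gap by (meson abs_ge_zero mult_right_mono order_trans)
  then show ?thesis
    using h_gt_1 by (simp add: field_simps)
qed

lemma pdist_eigenvector_le:
  assumes B: "B \<in> SL2k" and i: "i \<in> H" and v: "v \<noteq> 0" "B i *v v = l *\<^sub>R v" "\<bar>l\<bar> \<noteq> 1"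
  shows "pdist (B j *v v) v
    \<le> entry_sum (B j) * (\<bar>a j - c j\<bar> / \<bar>det2 e f\<bar> * (h / (h - 1)) + 1) * dcoc B A"
proof -
  let ?d = "dcoc B A" and ?K = "\<bar>a j - c j\<bar> / \<bar>det2 e f\<bar>"
  have c0: "0 \<le> h / (h - 1)"
    using h_gt_1 by simp
  have "\<bar>det2 e v\<bar> \<le> h / (h - 1) * ?d * norm v \<or> \<bar>det2 f v\<bar> \<le> h / (h - 1) * ?d * norm v"
  proof (cases "1 < \<bar>l\<bar>")
    case True
    then show ?thesis
      using expanding_eigenvector_near_e[OF i v(2)] mnorm_le_dcoc[of B i A] c0
      by (smt (verit) mult_left_mono mult_right_mono norm_ge_zero)
  next
    case False
    then show ?thesis
      using contracting_eigenvector_near_f[OF i v(2)] v(3) mnorm_le_dcoc[of B i A] c0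
      by (smt (verit) mult_left_mono mult_right_mono norm_ge_zero)
  qed
  then have "pdist (B j *v v) v \<le> entry_sum (B j) * (?K * (h / (h - 1) * ?d) + mnorm (B j - A j))"
    using B unfolding SL2k_def
    by (intro pdist_le_near_eigenline[OF eig_e eig_f transversal unit_e unit_f _ v(1)]) auto
  also have "\<dots> \<le> entry_sum (B j) * (?K * (h / (h - 1)) + 1) * ?d"
    using mult_left_mono[OF mnorm_le_dcoc[of B j A] entry_sum_nonneg[of "B j"]]
    by (simp add: algebra_simps)
  finally show ?thesis .
qed

lemma rho_dir_le_dcoc:
  assumes B: "B \<in> SL2k" "\<forall>j. entry_sum (B j) \<le> S"
    and v: "\<And>i. i \<in> H \<Longrightarrow> v (B i) \<noteq> 0 \<and> (\<exists>l. \<bar>l\<bar> \<noteq> 1 \<and> B i *v v (B i) = l *\<^sub>R v (B i))"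
  shows "rho_dir v H B \<le> S * ((\<Sum>k\<in>UNIV. \<bar>a k - c k\<bar>) / \<bar>det2 e f\<bar> * (h / (h - 1)) + 1) * dcoc B A"
proof (rule rho_dir_le[OF H_nonempty])
  fix i j assume i: "i \<in> H"
  then obtain l where "v (B i) \<noteq> 0" "B i *v v (B i) = l *\<^sub>R v (B i)" "\<bar>l\<bar> \<noteq> 1"
    using v by blast
  then have "pdist (B j *v v (B i)) (v (B i))
      \<le> entry_sum (B j) * (\<bar>a j - c j\<bar> / \<bar>det2 e f\<bar> * (h / (h - 1)) + 1) * dcoc B A"
    by (rule pdist_eigenvector_le[OF B(1) i])
  also have "\<dots> \<le> S * ((\<Sum>k\<in>UNIV. \<bar>a k - c k\<bar>) / \<bar>det2 e f\<bar> * (h / (h - 1)) + 1) * dcoc B A"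
    using B(2) order_trans[OF entry_sum_nonneg B(2)[rule_format]] entry_sum_nonneg[of "B j"] h_gt_1
    by (intro mult_right_mono mult_mono add_right_mono divide_right_mono member_le_sum dcoc_nonneg) auto
  finally show "pdist (B j *v v (B i)) (v (B i))
      \<le> S * ((\<Sum>k\<in>UNIV. \<bar>a k - c k\<bar>) / \<bar>det2 e f\<bar> * (h / (h - 1)) + 1) * dcoc B A" .
qed

lemma eventually_rho_dir_le:
  "\<exists>C. \<forall>\<^sub>F B in near_SL2 A. max (rho_dir edir_minus H B) (rho_dir edir_plus H B) \<le> C * dcoc B A"
proof -
  obtain S where "\<forall>\<^sub>F B in near_SL2 A. \<forall>j. entry_sum (B j) \<le> S"
    using eventually_near_SL2_entry_sum_le by blast
  then have "\<forall>\<^sub>F B in near_SL2 A. max (rho_dir edir_minus H B) (rho_dir edir_plus H B)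
      \<le> S * ((\<Sum>k\<in>UNIV. \<bar>a k - c k\<bar>) / \<bar>det2 e f\<bar> * (h / (h - 1)) + 1) * dcoc B A"
    using eventually_near_SL2_SL2k eventually_hyperbolic
    by eventually_elim (intro max.boundedI rho_dir_le_dcoc edir_eigenvectors; blast)
  then show ?thesis
    by blast
qed

lemma unit_eigenvectors_transversal:
  assumes i: "i \<in> H" and x: "norm x = 1" "M *v x = l *\<^sub>R x" "1 < \<bar>l\<bar>"
    and y: "norm y = 1" "M *v y = m *\<^sub>R y" "\<bar>m\<bar> < 1"
    and close: "h / (h - 1) * mnorm (M - A i) \<le> \<bar>det2 e f\<bar> / 4"
  shows "\<bar>det2 e f\<bar> / 2 \<le> \<bar>det2 x y\<bar>"
proof -
  have "\<bar>det2 e x\<bar> \<le> h / (h - 1) * mnorm (M - A i)" "\<bar>det2 f y\<bar> \<le> h / (h - 1) * mnorm (M - A i)"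
    using expanding_eigenvector_near_e[OF i x(2,3)] contracting_eigenvector_near_f[OF i y(2,3)]
      x(1) y(1) by simp_all
  then have "\<bar>det2 e x\<bar> \<le> \<bar>det2 e f\<bar> / 4" "\<bar>det2 f y\<bar> \<le> \<bar>det2 e f\<bar> / 4"
    using close by linarith+
  then have "\<bar>det2 e f\<bar> - 2 * (\<bar>det2 e f\<bar> / 4) \<le> \<bar>det2 x y\<bar>"
    by (intro abs_det2_ge_if_near[OF unit_e unit_f x(1) y(1) transversal]) auto
  then show ?thesis
    by simp
qed

lemma dDiag_le_rho_dir:
  defines "\<delta> \<equiv> \<bar>det2 e f\<bar> / 2"
  assumes B: "B \<in> SL2k" "\<forall>i\<in>H. hyperbolic (B i)" "\<forall>j. entry_sum (B j) \<le> S"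
    and close: "h / (h - 1) * dcoc B A \<le> \<delta> / 2"
    and small: "S * max (rho_dir edir_minus H B) (rho_dir edir_plus H B) \<le> \<delta> / 2"
  shows "dDiag B \<le> S / \<delta>\<^sup>2 * (2 + 2 * S / (3 * \<delta>)) * max (rho_dir edir_minus H B) (rho_dir edir_plus H B)"
proof -
  define \<rho> where "\<rho> = max (rho_dir edir_minus H B) (rho_dir edir_plus H B)"
  obtain i where i: "i \<in> H"
    using H_nonempty by blast
  then have hyp: "hyperbolic (B i)"
    using B(2) by blast
  obtain l where p: "edir_plus (B i) \<noteq> 0" "1 < \<bar>l\<bar>" "B i *v edir_plus (B i) = l *\<^sub>R edir_plus (B i)"
    using edir_plus_eigenvector[OF hyp] .
  obtain m where m: "edir_minus (B i) \<noteq> 0" "\<bar>m\<bar> < 1" "B i *v edir_minus (B i) = m *\<^sub>R edir_minus (B i)"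
    using edir_minus_eigenvector[OF hyp] .
  define x y where "x = sgn (edir_plus (B i))" and "y = sgn (edir_minus (B i))"
  have unit: "norm x = 1" "norm y = 1"
    using p(1) m(1) unfolding x_def y_def by (simp_all add: norm_sgn)
  have "h / (h - 1) * mnorm (B i - A i) \<le> h / (h - 1) * dcoc B A"
    using mnorm_le_dcoc[of B i A] h_gt_1 by (intro mult_left_mono) auto
  then have "h / (h - 1) * mnorm (B i - A i) \<le> \<bar>det2 e f\<bar> / 4"
    using close unfolding \<delta>_def by linarith
  moreover have "B i *v x = l *\<^sub>R x" "B i *v y = m *\<^sub>R y"
    unfolding x_def y_def by (rule sgn_eigenvector, fact p(3), rule sgn_eigenvector, fact m(3))
  ultimately have "\<delta> \<le> \<bar>det2 x y\<bar>"
    using unit_eigenvectors_transversal[OF i unit(1) _ p(2) unit(2) _ m(2)] unfolding \<delta>_def by simp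
  have "0 < \<delta>"
    using transversal unfolding \<delta>_def by simp
  have "0 \<le> S"
    using B(3) entry_sum_nonneg order_trans by blast
  have "pdist (B j *v edir_plus (B i)) (edir_plus (B i)) \<le> \<rho>"
    and "pdist (B j *v edir_minus (B i)) (edir_minus (B i)) \<le> \<rho>" for j
    using rho_dir_ge[OF i, of B j] unfolding \<rho>_def by (simp_all add: le_max_iff_disj)
  then have almost: "\<bar>det2 (B j *v x) x\<bar> \<le> S * \<rho>" "\<bar>det2 (B j *v y) y\<bar> \<le> S * \<rho>" for j
    using abs_det2_mult_vec_sgn_le[OF p(1), of "B j"] abs_det2_mult_vec_sgn_le[OF m(1), of "B j"]
      mult_mono[OF B(3)[rule_format, of j] _ \<open>0 \<le> S\<close> pdist_nonneg]
    unfolding x_def y_def by (meson order_trans)+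
  have "dDiag B \<le> S * \<rho> / \<delta>\<^sup>2 * (2 + 2 * S / (3 * \<delta>))"
    using dDiag_le_if_almost_invariant[OF unit \<open>0 < \<delta>\<close> \<open>\<delta> \<le> \<bar>det2 x y\<bar>\<close> B(1) _ almost] B(3) small
    unfolding \<rho>_def by blast
  then show ?thesis
    unfolding \<rho>_def by (simp add: ac_simps)
qed

lemma eventually_dDiag_le:
  "\<exists>C. \<forall>\<^sub>F B in near_SL2 A. dDiag B \<le> C * max (rho_dir edir_minus H B) (rho_dir edir_plus H B)"
proof -
  obtain S where S: "\<forall>\<^sub>F B in near_SL2 A. \<forall>j. entry_sum (B j) \<le> S"
    using eventually_near_SL2_entry_sum_le by blast
  obtain C where C: "\<forall>\<^sub>F B in near_SL2 A. max (rho_dir edir_minus H B) (rho_dir edir_plus H B) \<le> C * dcoc B A"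
    using eventually_rho_dir_le by blast
  define \<delta> where "\<delta> = \<bar>det2 e f\<bar> / 2"
  define \<epsilon> where "\<epsilon> = min (\<delta> / 2 / (h / (h - 1))) (\<delta> / 2 / (\<bar>S * C\<bar> + 1))"
  have "0 < \<epsilon>"
    using transversal h_gt_1 unfolding \<delta>_def \<epsilon>_def by (simp add: add_pos_nonneg)
  have "\<forall>\<^sub>F B in near_SL2 A.
      dDiag B \<le> S / \<delta>\<^sup>2 * (2 + 2 * S / (3 * \<delta>)) * max (rho_dir edir_minus H B) (rho_dir edir_plus H B)"
    using eventually_near_SL2_SL2k eventually_hyperbolic S C eventually_near_SL2_dcoc_less[OF \<open>0 < \<epsilon>\<close>]
  proof eventually_elim
    fix B assume B: "B \<in> SL2k" "\<forall>i\<in>H. hyperbolic (B i)" "\<forall>j. entry_sum (B j) \<le> S"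
      and \<rho>: "max (rho_dir edir_minus H B) (rho_dir edir_plus H B) \<le> C * dcoc B A"
      and d: "dcoc B A < \<epsilon>"
    show "dDiag B \<le> S / \<delta>\<^sup>2 * (2 + 2 * S / (3 * \<delta>)) * max (rho_dir edir_minus H B) (rho_dir edir_plus H B)"
    proof (rule dDiag_le_rho_dir[OF B, folded \<delta>_def])
      show "h / (h - 1) * dcoc B A \<le> \<delta> / 2"
        using d h_gt_1 pos_le_divide_eq[of "h / (h - 1)" "dcoc B A" "\<delta> / 2"]
        unfolding \<epsilon>_def by (simp add: mult.commute)
      have "0 \<le> S"
        using B(3) entry_sum_nonneg order_trans by blast
      then have "S * max (rho_dir edir_minus H B) (rho_dir edir_plus H B) \<le> S * C * dcoc B A"
        using mult_left_mono[OF \<rho>] by (simp add: mult.assoc)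
      also have "\<dots> \<le> (\<bar>S * C\<bar> + 1) * dcoc B A"
        using dcoc_nonneg[of B A] by (intro mult_right_mono) auto
      also have "\<dots> \<le> \<delta> / 2"
        using d transversal unfolding \<epsilon>_def \<delta>_def by (simp add: min_less_iff_disj field_simps)
      finally show "S * max (rho_dir edir_minus H B) (rho_dir edir_plus H B) \<le> \<delta> / 2" .
    qed
  qed
  then show ?thesis
    by blast
qed

lemma eventually_rho_dir_plus_le_coc_inv:
  "\<exists>K. \<forall>\<^sub>F B in near_SL2 A. rho_dir edir_plus H B \<le> K * rho_dir edir_minus H (coc_inv B)"
proof -
  obtain S where "\<forall>\<^sub>F B in near_SL2 A. \<forall>j. entry_sum (B j) \<le> S"
    using eventually_near_SL2_entry_sum_le by blast
  then have "\<forall>\<^sub>F B in near_SL2 A. rho_dir edir_plus H B \<le> S\<^sup>2 * rho_dir edir_minus H (coc_inv B)"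
    using eventually_near_SL2_SL2k eventually_hyperbolic
    by eventually_elim (intro rho_dir_plus_le_coc_inv H_nonempty; blast)
  then show ?thesis
    by blast
qed

lemma eventually_dDiag_le_rho_minus:
  "\<exists>C. \<forall>\<^sub>F B in near_SL2 A.
     dDiag B \<le> C * rho_dir edir_minus H B \<or> dDiag B \<le> C * rho_dir edir_minus H (coc_inv B)"
proof -
  obtain C\<^sub>D where C\<^sub>D: "\<forall>\<^sub>F B in near_SL2 A.
      dDiag B \<le> C\<^sub>D * max (rho_dir edir_minus H B) (rho_dir edir_plus H B)"
    using eventually_dDiag_le by blast
  obtain K where K: "\<forall>\<^sub>F B in near_SL2 A. rho_dir edir_plus H B \<le> K * rho_dir edir_minus H (coc_inv B)"
    using eventually_rho_dir_plus_le_coc_inv by blast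
  define C where "C = \<bar>C\<^sub>D\<bar> * max 1 K"
  have C: "\<bar>C\<^sub>D\<bar> \<le> C" "\<bar>C\<^sub>D\<bar> * K \<le> C"
    unfolding C_def using mult_left_mono[of 1 "max 1 K" "\<bar>C\<^sub>D\<bar>"]
      mult_left_mono[of K "max 1 K" "\<bar>C\<^sub>D\<bar>"] by simp_all
  have "\<forall>\<^sub>F B in near_SL2 A.
     dDiag B \<le> C * rho_dir edir_minus H B \<or> dDiag B \<le> C * rho_dir edir_minus H (coc_inv B)"
    using C\<^sub>D K
  proof eventually_elim
    fix B
    let ?m = "rho_dir edir_minus H B" and ?p = "rho_dir edir_plus H B"
      and ?m' = "rho_dir edir_minus H (coc_inv B)"
    assume D: "dDiag B \<le> C\<^sub>D * max ?m ?p" and p: "?p \<le> K * ?m'"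
    have nonneg: "0 \<le> ?m" "0 \<le> ?p" "0 \<le> ?m'"
      using rho_dir_nonneg[OF H_nonempty] by blast+
    then have D': "dDiag B \<le> \<bar>C\<^sub>D\<bar> * max ?m ?p"
      using D mult_right_mono[OF abs_ge_self, of "max ?m ?p" C\<^sub>D] by (simp add: le_max_iff_disj)
    show "dDiag B \<le> C * ?m \<or> dDiag B \<le> C * ?m'"
    proof (cases "?p \<le> ?m")
      case True
      then show ?thesis
        using D' mult_right_mono[OF C(1) nonneg(1)] by (simp add: max_absorb1)
    next
      case False
      then have "dDiag B \<le> \<bar>C\<^sub>D\<bar> * ?p"
        using D' by (simp add: max_absorb2)
      also have "\<dots> \<le> \<bar>C\<^sub>D\<bar> * K * ?m'"
        using p by (simp add: mult_left_mono mult.assoc)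
      also have "\<dots> \<le> C * ?m'"
        using mult_right_mono[OF C(2) nonneg(3)] .
      finally show ?thesis by simp
    qed
  qed
  then show ?thesis
    by blast
qed

lemma eventually_estimates:
  "\<exists>C. \<forall>\<^sub>F B in near_SL2 A. (\<forall>i\<in>H. hyperbolic (B i)) \<and>
     dDiag B \<le> C * max (rho_dir edir_minus H B) (rho_dir edir_plus H B) \<and>
     max (rho_dir edir_minus H B) (rho_dir edir_plus H B) \<le> C * dcoc B A \<and>
     (dDiag B \<le> C * rho_dir edir_minus H B \<or> dDiag B \<le> C * rho_dir edir_minus H (coc_inv B))"
proof -
  obtain C\<^sub>1 where 1: "\<forall>\<^sub>F B in near_SL2 A.
      dDiag B \<le> C\<^sub>1 * max (rho_dir edir_minus H B) (rho_dir edir_plus H B)"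
    using eventually_dDiag_le by blast
  obtain C\<^sub>2 where 2: "\<forall>\<^sub>F B in near_SL2 A.
      max (rho_dir edir_minus H B) (rho_dir edir_plus H B) \<le> C\<^sub>2 * dcoc B A"
    using eventually_rho_dir_le by blast
  obtain C\<^sub>3 where 3: "\<forall>\<^sub>F B in near_SL2 A.
      dDiag B \<le> C\<^sub>3 * rho_dir edir_minus H B \<or> dDiag B \<le> C\<^sub>3 * rho_dir edir_minus H (coc_inv B)"
    using eventually_dDiag_le_rho_minus by blast
  define C where "C = max (max C\<^sub>1 C\<^sub>2) C\<^sub>3"
  have le: "x \<le> C * y" if "x \<le> C' * y" "C' \<le> C" "0 \<le> y" for x y C'
    using that(1) mult_right_mono[OF that(2,3)] by (rule order_trans)
  have C: "C\<^sub>1 \<le> C" "C\<^sub>2 \<le> C" "C\<^sub>3 \<le> C"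
    unfolding C_def by auto
  have nonneg: "0 \<le> rho_dir v H B" "0 \<le> dcoc B A" for v B
    using rho_dir_nonneg[OF H_nonempty] dcoc_nonneg by auto
  show ?thesis
  proof (intro exI[of _ C] eventually_mono[OF eventually_conj[OF eventually_hyperbolic
        eventually_conj[OF 1 eventually_conj[OF 2 3]]]] conjI; elim conjE)
    fix B
    let ?m = "rho_dir edir_minus H B" and ?p = "rho_dir edir_plus H B"
      and ?m' = "rho_dir edir_minus H (coc_inv B)"
    assume "\<forall>i\<in>H. hyperbolic (B i)" and "dDiag B \<le> C\<^sub>1 * max ?m ?p"
      and "max ?m ?p \<le> C\<^sub>2 * dcoc B A" and "dDiag B \<le> C\<^sub>3 * ?m \<or> dDiag B \<le> C\<^sub>3 * ?m'"
    then show "\<forall>i\<in>H. hyperbolic (B i)" "dDiag B \<le> C * max ?m ?p" "max ?m ?p \<le> C * dcoc B A"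
      "dDiag B \<le> C * ?m \<or> dDiag B \<le> C * ?m'"
      using le C nonneg by (auto simp: le_max_iff_disj)
  qed
qed

end

theorem proposition3p6:
  fixes p :: "'k::finite \<Rightarrow> real" and A :: "'k \<Rightarrow> mat2"
  assumes "\<forall>j. p j > 0" and "(\<Sum>j\<in>UNIV. p j) = 1"
    and "A \<in> Diag" and "lyap p A > 0"
  shows "\<exists>\<epsilon>>0. \<exists>C::real.
    (\<forall>B\<in>SL2k. dcoc B A < \<epsilon> \<longrightarrow> (\<forall>i\<in>Sigma_H p A. hyperbolic (B i))) \<and>
    (\<forall>B\<in>SL2k. dcoc B A < \<epsilon> \<longrightarrow>
        dDiag B \<le> C * rho p A B \<and> rho p A B \<le> C * dcoc B A) \<and>
    (\<forall>B\<in>SL2k. dcoc B A < \<epsilon> \<longrightarrow>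
        dDiag B \<le> C * rho_minus p A B \<or> dDiag B \<le> C * rho_minus p A (coc_inv B))"
proof -
  note p = assms(1)[rule_format] assms(2)
  obtain f where e: "norm (e_plus p A) = 1" "norm f = 1" "det2 (e_plus p A) f \<noteq> 0"
    "inv_line A (e_plus p A)" "inv_line A f" "line_exp p A (e_plus p A) = lyap p A"
    using e_plus_spec[OF p assms(3)] .
  have det: "\<bar>det (A j)\<bar> = 1" for j
    using assms(3) unfolding Diag_def SL2k_def by blast
  have "line_eig A (e_plus p A) j \<noteq> 0" for j
    using line_eig_mult_eq_det[OF e(4,5,3), of j] det[of j] by (metis abs_0 mult_zero_left zero_neq_one)
  then interpret diagonal_cocycle A "e_plus p A" f "line_eig A (e_plus p A)" "line_eig A f"
    "Sigma_H p A" "exp (lyap p A)"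
    using e det inv_line_eig Sigma_H_nonempty[OF p e(6)] assms(4)
    by unfold_locales (auto simp: Sigma_H_def)
  obtain C where "\<forall>\<^sub>F B in near_SL2 A. (\<forall>i\<in>Sigma_H p A. hyperbolic (B i)) \<and>
     dDiag B \<le> C * rho p A B \<and> rho p A B \<le> C * dcoc B A \<and>
     (dDiag B \<le> C * rho_minus p A B \<or> dDiag B \<le> C * rho_minus p A (coc_inv B))"
    using eventually_estimates unfolding rho_def rho_minus_eq_rho_dir rho_plus_eq_rho_dir by blast
  then show ?thesis
    unfolding eventually_near_SL2 by blast
qed

end
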